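(* Let $\{(\mathcal{X}_j,\mathring{\mathcal{X}}_j,p_j)\}_{j\in\mathcal{I}}$ be $B$-$B$-bimodules with specified projections with reduced free product $(\mathcal{X},\mathring{\mathcal{X}},p)$, let $i\in\mathcal{I}$, $\mathcal{A}_{i,\mathcal{F}}=\lambda_i(\mathcal{L}(\mathcal{X}_i))$, $\mathcal{A}_{i,\mathcal{B}}=P_i\lambda_i(\mathcal{L}(\mathcal{X}_i))P_i$, and $\mathcal{A}_i$ the algebra generated by $\mathcal{A}_{i,\mathcal{F}}\cup\mathcal{A}_{i,\mathcal{B}}$. If $A\in\mathcal{A}_i$ is a Boolean product of elements from $\mathcal{A}_{i,\mathcal{F}}\cup\mathcal{A}_{i,\mathcal{B}}$, then $A\in\mathcal{A}_{i,\mathcal{B}}$; in particular $A(\mathcal{X})\subset B\oplus\mathring{\mathcal{X}}_i$.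
   Context: $B$ is a unital complex algebra. A $B$-$B$-bimodule with specified projection is a triple $(\mathcal{X},\mathring{\mathcal{X}},p)$ with $\mathcal{X}=B\oplus\mathring{\mathcal{X}}$ a direct sum of $B$-$B$-bimodules and $p(b\oplus\eta)=b$; $\mathcal{L}(\mathcal{X})$ is the algebra of linear operators on $\mathcal{X}$ respecting the bimodule structure. The reduced free product is $\mathcal{X}=B\oplus\mathring{\mathcal{X}}$ with $\mathring{\mathcal{X}}=\bigoplus_{n\ge1}\bigoplus_{i_1\ne\cdots\ne i_n}\mathring{\mathcal{X}}_{i_1}\otimes_B\cdots\otimes_B\mathring{\mathcal{X}}_{i_n}$ (consecutive indices distinct). For $i\in\mathcal{I}$, $\mathcal{X}(i)=B\oplus\bigoplus_{n\ge1}\bigoplus_{i_1\ne\cdots\ne i_n,\ i_1\ne i}\mathring{\mathcal{X}}_{i_1}\otimes_B\cdots\otimes_B\mathring{\mathcal{X}}_{i_n}$, $V_i:\mathcal{X}\to\mathcal{X}_i\otimes_B\mathcal{X}(i)$ is the natural isomorphism, $\lambda_i(a)=V_i^{-1}(a\otimes I)V_i$, and $P_i$ is the projection of $\mathcal{X}$ onto the summand $B\oplus\mathring{\mathcal{X}}_i$, vanishing on the other summands. For $S_i\subset\mathcal{A}_{i,\mathcal{F}}\cup\mathcal{A}_{i,\mathcal{B}}$, a product $a_1\cdots a_m$ with all $a_k\in S_i$ is a simple product of elements from $S_i$; it is a Boolean product if $a_k\in S_i\cap\mathcal{A}_{i,\mathcal{B}}$ for some $k$. *)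

theory Defs
  imports Complex_Main "HOL-Library.FuncSet"
begin

definition calg :: "(complex \<Rightarrow> 'b::ring_1 \<Rightarrow> 'b) \<Rightarrow> bool" where
  "calg scB \<longleftrightarrow>
     (\<forall>c x y. scB c (x + y) = scB c x + scB c y) \<and>
     (\<forall>c d x. scB (c + d) x = scB c x + scB d x) \<and>
     (\<forall>c d x. scB (c * d) x = scB c (scB d x)) \<and>
     (\<forall>x. scB 1 x = x) \<and>
     (\<forall>c x y. scB c (x * y) = scB c x * y) \<and>
     (\<forall>c x y. scB c (x * y) = x * scB c y)"

record ('b, 'm) bimod =
  carr :: "'m set"
  zer  :: 'm
  ad   :: "'m \<Rightarrow> 'm \<Rightarrow> 'm"
  sc   :: "complex \<Rightarrow> 'm \<Rightarrow> 'm"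
  lac  :: "'b \<Rightarrow> 'm \<Rightarrow> 'm"
  rac  :: "'m \<Rightarrow> 'b \<Rightarrow> 'm"

definition bimodule :: "(complex \<Rightarrow> 'b::ring_1 \<Rightarrow> 'b) \<Rightarrow> ('b, 'm) bimod \<Rightarrow> bool" where
  "bimodule scB M \<longleftrightarrow>
     zer M \<in> carr M \<and>
     (\<forall>x\<in>carr M. \<forall>y\<in>carr M. ad M x y \<in> carr M) \<and>
     (\<forall>c. \<forall>x\<in>carr M. sc M c x \<in> carr M) \<and>
     (\<forall>b. \<forall>x\<in>carr M. lac M b x \<in> carr M) \<and>
     (\<forall>b. \<forall>x\<in>carr M. rac M x b \<in> carr M) \<and>
     \<comment> \<open>complex vector space\<close>
     (\<forall>x\<in>carr M. \<forall>y\<in>carr M. \<forall>z\<in>carr M. ad M (ad M x y) z = ad M x (ad M y z)) \<and>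
     (\<forall>x\<in>carr M. \<forall>y\<in>carr M. ad M x y = ad M y x) \<and>
     (\<forall>x\<in>carr M. ad M (zer M) x = x) \<and>
     (\<forall>x\<in>carr M. ad M x (sc M (-1) x) = zer M) \<and>
     (\<forall>c. \<forall>x\<in>carr M. \<forall>y\<in>carr M. sc M c (ad M x y) = ad M (sc M c x) (sc M c y)) \<and>
     (\<forall>c d. \<forall>x\<in>carr M. sc M (c + d) x = ad M (sc M c x) (sc M d x)) \<and>
     (\<forall>c d. \<forall>x\<in>carr M. sc M (c * d) x = sc M c (sc M d x)) \<and>
     (\<forall>x\<in>carr M. sc M 1 x = x) \<and>
     \<comment> \<open>left B-module\<close>
     (\<forall>b b'. \<forall>x\<in>carr M. lac M (b + b') x = ad M (lac M b x) (lac M b' x)) \<and>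
     (\<forall>b. \<forall>x\<in>carr M. \<forall>y\<in>carr M. lac M b (ad M x y) = ad M (lac M b x) (lac M b y)) \<and>
     (\<forall>b b'. \<forall>x\<in>carr M. lac M (b * b') x = lac M b (lac M b' x)) \<and>
     (\<forall>x\<in>carr M. lac M 1 x = x) \<and>
     (\<forall>c b. \<forall>x\<in>carr M. lac M (scB c b) x = sc M c (lac M b x)) \<and>
     (\<forall>c b. \<forall>x\<in>carr M. lac M b (sc M c x) = sc M c (lac M b x)) \<and>
     \<comment> \<open>right B-module\<close>
     (\<forall>b b'. \<forall>x\<in>carr M. rac M x (b + b') = ad M (rac M x b) (rac M x b')) \<and>
     (\<forall>b. \<forall>x\<in>carr M. \<forall>y\<in>carr M. rac M (ad M x y) b = ad M (rac M x b) (rac M y b)) \<and>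
     (\<forall>b b'. \<forall>x\<in>carr M. rac M x (b * b') = rac M (rac M x b) b') \<and>
     (\<forall>x\<in>carr M. rac M x 1 = x) \<and>
     (\<forall>c b. \<forall>x\<in>carr M. rac M x (scB c b) = sc M c (rac M x b)) \<and>
     (\<forall>c b. \<forall>x\<in>carr M. rac M (sc M c x) b = sc M c (rac M x b)) \<and>
     \<comment> \<open>bimodule compatibility\<close>
     (\<forall>b b'. \<forall>x\<in>carr M. lac M b (rac M x b') = rac M (lac M b x) b')"

text \<open>Given the bimodule M (playing the role of X\<ring>_j), the space X_j = B \<oplus> X\<ring>_j
is modelled by pairs (b, x); the specified projection is p(b, x) = b.\<close>

definition pcar :: "('b, 'm) bimod \<Rightarrow> ('b \<times> 'm) set" where
  "pcar M = UNIV \<times> carr M"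

definition padd :: "('b::ring_1, 'm) bimod \<Rightarrow> 'b \<times> 'm \<Rightarrow> 'b \<times> 'm \<Rightarrow> 'b \<times> 'm" where
  "padd M p q = (fst p + fst q, ad M (snd p) (snd q))"

definition psc :: "(complex \<Rightarrow> 'b \<Rightarrow> 'b) \<Rightarrow> ('b, 'm) bimod \<Rightarrow> complex \<Rightarrow> 'b \<times> 'm \<Rightarrow> 'b \<times> 'm" where
  "psc scB M c p = (scB c (fst p), sc M c (snd p))"

definition plac :: "('b::ring_1, 'm) bimod \<Rightarrow> 'b \<Rightarrow> 'b \<times> 'm \<Rightarrow> 'b \<times> 'm" where
  "plac M b p = (b * fst p, lac M b (snd p))"

definition prac :: "('b::ring_1, 'm) bimod \<Rightarrow> 'b \<times> 'm \<Rightarrow> 'b \<Rightarrow> 'b \<times> 'm" where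
  "prac M p b = (fst p * b, rac M (snd p) b)"

text \<open>\<L>(X_j): linear operators on X_j respecting the bimodule structure
(complex linear B-B-bimodule maps), as extensional functions on the carrier.\<close>

definition opL :: "(complex \<Rightarrow> 'b::ring_1 \<Rightarrow> 'b) \<Rightarrow> ('b, 'm) bimod \<Rightarrow> ('b \<times> 'm \<Rightarrow> 'b \<times> 'm) set" where
  "opL scB M = {T. T \<in> extensional (pcar M) \<and> T \<in> pcar M \<rightarrow> pcar M \<and>
     (\<forall>p\<in>pcar M. \<forall>q\<in>pcar M. T (padd M p q) = padd M (T p) (T q)) \<and>
     (\<forall>c. \<forall>p\<in>pcar M. T (psc scB M c p) = psc scB M c (T p)) \<and>
     (\<forall>b. \<forall>p\<in>pcar M. T (plac M b p) = plac M b (T p)) \<and>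
     (\<forall>b. \<forall>p\<in>pcar M. T (prac M p b) = prac M (T p) b)}"

text \<open>Elementary tensors x_1 \<otimes> ... \<otimes> x_n with x_k \<in> X\<ring>_{i_k} and i_1 \<noteq> ... \<noteq> i_n
are represented by nonempty words [(i_1,x_1),...,(i_n,x_n)].  The space
X\<ring> = (+) X\<ring>_{i_1} \<otimes>_B ... \<otimes>_B X\<ring>_{i_n} is the quotient of the free complex vector
space on such words by the subspace generated by the multilinearity and
B-balancing relations.\<close>

type_synonym ('i, 'm) word = "('i \<times> 'm) list"
type_synonym ('i, 'm) fvec = "('i, 'm) word \<Rightarrow> complex"

definition wordv :: "('i \<Rightarrow> ('b, 'm) bimod) \<Rightarrow> ('i, 'm) word \<Rightarrow> bool" where
  "wordv M w \<longleftrightarrow> w \<noteq> [] \<and>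
     (\<forall>k < length w. snd (w ! k) \<in> carr (M (fst (w ! k)))) \<and>
     (\<forall>k. Suc k < length w \<longrightarrow> fst (w ! k) \<noteq> fst (w ! Suc k))"

definition FV :: "('i \<Rightarrow> ('b, 'm) bimod) \<Rightarrow> ('i, 'm) fvec set" where
  "FV M = {f. finite {w. f w \<noteq> 0} \<and> (\<forall>w. f w \<noteq> 0 \<longrightarrow> wordv M w)}"

definition delta :: "('i, 'm) word \<Rightarrow> ('i, 'm) fvec" where
  "delta w = (\<lambda>v. if v = w then 1 else 0)"

definition fadd :: "('i, 'm) fvec \<Rightarrow> ('i, 'm) fvec \<Rightarrow> ('i, 'm) fvec" where
  "fadd f g = (\<lambda>w. f w + g w)"

definition fsc :: "complex \<Rightarrow> ('i, 'm) fvec \<Rightarrow> ('i, 'm) fvec" where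
  "fsc c f = (\<lambda>w. c * f w)"

definition Rel :: "('i \<Rightarrow> ('b, 'm) bimod) \<Rightarrow> ('i, 'm) fvec set" where
  "Rel M =
     {fadd (delta (w[k := (j, ad (M j) x y)]))
        (fsc (-1) (fadd (delta (w[k := (j, x)])) (delta (w[k := (j, y)])))) | w k j x y.
        wordv M w \<and> k < length w \<and> fst (w ! k) = j \<and> x \<in> carr (M j) \<and> y \<in> carr (M j)} \<union>
     {fadd (delta (w[k := (j, sc (M j) c x)])) (fsc (- c) (delta (w[k := (j, x)]))) | w k j x c.
        wordv M w \<and> k < length w \<and> fst (w ! k) = j \<and> x \<in> carr (M j)} \<union>
     {fadd (delta (w[k := (j, rac (M j) x b), Suc k := (j', y)]))
        (fsc (-1) (delta (w[k := (j, x), Suc k := (j', lac (M j') b y)]))) | w k j j' x y b.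
        wordv M w \<and> Suc k < length w \<and> fst (w ! k) = j \<and> fst (w ! Suc k) = j' \<and>
        x \<in> carr (M j) \<and> y \<in> carr (M j')}"

inductive_set NSp :: "('i \<Rightarrow> ('b, 'm) bimod) \<Rightarrow> ('i, 'm) fvec set" for M where
  NSp_zero: "(\<lambda>w. 0) \<in> NSp M"
| NSp_rel: "g \<in> Rel M \<Longrightarrow> g \<in> NSp M"
| NSp_add: "f \<in> NSp M \<Longrightarrow> g \<in> NSp M \<Longrightarrow> fadd f g \<in> NSp M"
| NSp_sc: "f \<in> NSp M \<Longrightarrow> fsc c f \<in> NSp M"

definition cls :: "('i \<Rightarrow> ('b, 'm) bimod) \<Rightarrow> ('i, 'm) fvec \<Rightarrow> ('i, 'm) fvec set" where
  "cls M f = {g \<in> FV M. fadd g (fsc (-1) f) \<in> NSp M}"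

definition rep :: "('i, 'm) fvec set \<Rightarrow> ('i, 'm) fvec" where
  "rep C = (SOME f. f \<in> C)"

text \<open>Carrier of X\<ring> and of X = B \<oplus> X\<ring>.\<close>
definition Xo :: "('i \<Rightarrow> ('b, 'm) bimod) \<Rightarrow> ('i, 'm) fvec set set" where
  "Xo M = cls M ` FV M"

definition Xc :: "('i \<Rightarrow> ('b, 'm) bimod) \<Rightarrow> ('b \<times> ('i, 'm) fvec set) set" where
  "Xc M = UNIV \<times> Xo M"

definition lext :: "(('i, 'm) word \<Rightarrow> ('i, 'm) fvec) \<Rightarrow> ('i, 'm) fvec \<Rightarrow> ('i, 'm) fvec" where
  "lext \<phi> f = (\<lambda>v. \<Sum>w\<in>{w. f w \<noteq> 0}. f w * \<phi> w v)"

definition wl :: "('i \<Rightarrow> ('b, 'm) bimod) \<Rightarrow> 'b \<Rightarrow> ('i, 'm) word \<Rightarrow> ('i, 'm) word" where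
  "wl M b w = (case w of [] \<Rightarrow> [] | (j, x) # r \<Rightarrow> (j, lac (M j) b x) # r)"

definition wr :: "('i \<Rightarrow> ('b, 'm) bimod) \<Rightarrow> ('i, 'm) word \<Rightarrow> 'b \<Rightarrow> ('i, 'm) word" where
  "wr M w b = (if w = [] then []
     else butlast w @ [(fst (last w), rac (M (fst (last w))) (snd (last w)) b)])"

definition xadd :: "('i \<Rightarrow> ('b::ring_1, 'm) bimod) \<Rightarrow> 'b \<times> ('i, 'm) fvec set \<Rightarrow> 'b \<times> ('i, 'm) fvec set \<Rightarrow> 'b \<times> ('i, 'm) fvec set" where
  "xadd M p q = (fst p + fst q, cls M (fadd (rep (snd p)) (rep (snd q))))"

definition xsc :: "(complex \<Rightarrow> 'b \<Rightarrow> 'b) \<Rightarrow> ('i \<Rightarrow> ('b, 'm) bimod) \<Rightarrow> complex \<Rightarrow> 'b \<times> ('i, 'm) fvec set \<Rightarrow> 'b \<times> ('i, 'm) fvec set" where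
  "xsc scB M c p = (scB c (fst p), cls M (fsc c (rep (snd p))))"

definition xlac :: "('i \<Rightarrow> ('b::ring_1, 'm) bimod) \<Rightarrow> 'b \<Rightarrow> 'b \<times> ('i, 'm) fvec set \<Rightarrow> 'b \<times> ('i, 'm) fvec set" where
  "xlac M b p = (b * fst p, cls M (lext (\<lambda>w. delta (wl M b w)) (rep (snd p))))"

definition xrac :: "('i \<Rightarrow> ('b::ring_1, 'm) bimod) \<Rightarrow> 'b \<times> ('i, 'm) fvec set \<Rightarrow> 'b \<Rightarrow> 'b \<times> ('i, 'm) fvec set" where
  "xrac M p b = (fst p * b, cls M (lext (\<lambda>w. delta (wr M w b)) (rep (snd p))))"

text \<open>The operator \<lambda>_i(a) = V_i^(-1) (a \<otimes> I) V_i, written out on the generators of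
X \<cong> X_i \<otimes>_B X(i):  b \<mapsto> a(b) \<otimes> 1;  a word not starting in i is 1 \<otimes> w;
a word x \<otimes> r starting in i is x \<otimes> r (with r = 1 if r is empty).\<close>

definition lamw :: "('i \<Rightarrow> ('b::ring_1, 'm) bimod) \<Rightarrow> 'i \<Rightarrow> ('b \<times> 'm \<Rightarrow> 'b \<times> 'm)
    \<Rightarrow> ('i, 'm) word \<Rightarrow> 'b \<times> ('i, 'm) fvec" where
  "lamw M i a w =
     (if fst (hd w) = i then
        (let (b', \<eta>) = a (0, snd (hd w)) in
          if tl w = [] then (b', delta [(i, \<eta>)])
          else (0, fadd (delta (wl M b' (tl w))) (delta ((i, \<eta>) # tl w))))
      else
        (let (b', \<eta>) = a (1, zer (M i)) in
          (0, fadd (delta (wl M b' w)) (delta ((i, \<eta>) # w)))))"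

definition lam :: "(complex \<Rightarrow> 'b::ring_1 \<Rightarrow> 'b) \<Rightarrow> ('i \<Rightarrow> ('b, 'm) bimod) \<Rightarrow> 'i \<Rightarrow> ('b \<times> 'm \<Rightarrow> 'b \<times> 'm)
    \<Rightarrow> 'b \<times> ('i, 'm) fvec set \<Rightarrow> 'b \<times> ('i, 'm) fvec set" where
  "lam scB M i a = restrict (\<lambda>(b0, C).
     (let f = rep C; (b', \<eta>) = a (b0, zer (M i)) in
       (b' + (\<Sum>w\<in>{w. f w \<noteq> 0}. scB (f w) (fst (lamw M i a w))),
        cls M (fadd (delta [(i, \<eta>)]) (\<lambda>v. \<Sum>w\<in>{w. f w \<noteq> 0}. f w * snd (lamw M i a w) v)))))
     (Xc M)"

text \<open>P_i: projection of X onto B \<oplus> X\<ring>_i, vanishing on the other summands.\<close>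
definition Pj :: "('i \<Rightarrow> ('b, 'm) bimod) \<Rightarrow> 'i \<Rightarrow> 'b \<times> ('i, 'm) fvec set \<Rightarrow> 'b \<times> ('i, 'm) fvec set" where
  "Pj M i = restrict (\<lambda>(b0, C).
     (b0, cls M (\<lambda>w. if length w = 1 \<and> fst (hd w) = i then rep C w else 0))) (Xc M)"

text \<open>The summand B \<oplus> X\<ring>_i of X.\<close>
definition Xsub :: "('i \<Rightarrow> ('b, 'm) bimod) \<Rightarrow> 'i \<Rightarrow> ('b \<times> ('i, 'm) fvec set) set" where
  "Xsub M i = {(b, cls M f) | b f. f \<in> FV M \<and>
      (\<forall>w. f w \<noteq> 0 \<longrightarrow> length w = 1 \<and> fst (hd w) = i)}"

definition AF :: "(complex \<Rightarrow> 'b::ring_1 \<Rightarrow> 'b) \<Rightarrow> ('i \<Rightarrow> ('b, 'm) bimod) \<Rightarrow> 'i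
    \<Rightarrow> ('b \<times> ('i, 'm) fvec set \<Rightarrow> 'b \<times> ('i, 'm) fvec set) set" where
  "AF scB M i = lam scB M i ` opL scB (M i)"

definition AB :: "(complex \<Rightarrow> 'b::ring_1 \<Rightarrow> 'b) \<Rightarrow> ('i \<Rightarrow> ('b, 'm) bimod) \<Rightarrow> 'i
    \<Rightarrow> ('b \<times> ('i, 'm) fvec set \<Rightarrow> 'b \<times> ('i, 'm) fvec set) set" where
  "AB scB M i = (\<lambda>a. compose (Xc M) (Pj M i) (compose (Xc M) (lam scB M i a) (Pj M i)))
                 ` opL scB (M i)"

definition oprod :: "'x set \<Rightarrow> ('x \<Rightarrow> 'x) list \<Rightarrow> 'x \<Rightarrow> 'x" where
  "oprod X as = foldr (compose X) as (restrict id X)"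

definition simple_product :: "'x set \<Rightarrow> ('x \<Rightarrow> 'x) set \<Rightarrow> ('x \<Rightarrow> 'x) \<Rightarrow> bool" where
  "simple_product X S A \<longleftrightarrow> (\<exists>as. as \<noteq> [] \<and> set as \<subseteq> S \<and> A = oprod X as)"

definition boolean_product :: "'x set \<Rightarrow> ('x \<Rightarrow> 'x) set \<Rightarrow> ('x \<Rightarrow> 'x) set \<Rightarrow> ('x \<Rightarrow> 'x) \<Rightarrow> bool" where
  "boolean_product X S SB A \<longleftrightarrow>
     (\<exists>as. as \<noteq> [] \<and> set as \<subseteq> S \<and> A = oprod X as \<and> (\<exists>a\<in>set as. a \<in> S \<inter> SB))"

end

theory Submission
  imports Defs "HOL-Library.Function_Algebras"
begin

text \<open>On \<open>X\<close>, every element of \<open>\<A>\<^sub>i\<^sub>,\<^sub>\<B>\<close> acts as \<open>x \<mapsto> \<lambda>\<^sub>i(a) (P\<^sub>i x)\<close>, because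
  \<open>P\<^sub>i\<close> is idempotent and commutes with every \<open>\<lambda>\<^sub>i(a)\<close>. On the range \<open>B \<oplus> X\<ring>\<^sub>i\<close> of \<open>P\<^sub>i\<close>
  the map \<open>\<lambda>\<^sub>i\<close> is multiplicative, \<open>\<lambda>\<^sub>i(a) \<lambda>\<^sub>i(b) P\<^sub>i = \<lambda>\<^sub>i(a b) P\<^sub>i\<close>. Hence in a product
  with a Boolean factor, the factors to the left of a \<open>P\<^sub>i\<close> are absorbed into it by
  multiplicativity and the free factors to its right by commutation, leaving a single
  \<open>\<lambda>\<^sub>i(c) P\<^sub>i = P\<^sub>i \<lambda>\<^sub>i(c) P\<^sub>i \<in> \<A>\<^sub>i\<^sub>,\<^sub>\<B>\<close>, whose range lies in \<open>B \<oplus> X\<ring>\<^sub>i\<close>.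

  Since \<open>X\<ring>\<close> is a quotient of free vectors on words, \<open>\<lambda>\<^sub>i(a)\<close> and \<open>P\<^sub>i\<close> are computed on
  representatives; the work lies in lifting \<open>\<lambda>\<^sub>i(a)\<close> to free vectors, via
  \<open>X \<cong> X\<^sub>i \<otimes>\<^sub>B X(i)\<close>, and checking that the lift preserves the relation subspace.
  Multiplicativity then only needs to be checked on the generators \<open>b \<oplus> x\<close>, \<open>x \<in> X\<ring>\<^sub>i\<close>.\<close>

locale bimodule_family =
  fixes scB :: "complex \<Rightarrow> 'b::ring_1 \<Rightarrow> 'b"
    and M :: "'i \<Rightarrow> ('b, 'm) bimod"
  assumes calg: "calg scB"
    and bimodules: "\<forall>j. bimodule scB (M j)"
begin

lemma scB_add: "scB c (x + y) = scB c x + scB c y"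
  using calg unfolding calg_def by blast

lemma scB_add_left: "scB (c + d) x = scB c x + scB d x"
  using calg unfolding calg_def by blast

lemma scB_mult: "scB (c * d) x = scB c (scB d x)"
  using calg unfolding calg_def by blast

lemma scB_one: "scB 1 x = x"
  using calg unfolding calg_def by blast

lemma scB_zero: "scB c 0 = 0"
  using scB_add[of c 0 0] by simp

lemma scB_zero_left: "scB 0 x = 0"
  using scB_add_left[of 0 0 x] by simp

lemma scB_diff_left: "scB (c - d) x = scB c x - scB d x"
  using scB_add_left[of "c - d" d x] by simp

lemma scB_sum: "finite S \<Longrightarrow> scB c (\<Sum>w\<in>S. f w) = (\<Sum>w\<in>S. scB c (f w))"
  by (induction S rule: finite_induct) (simp_all add: scB_zero scB_add)

lemmas bimodule_axioms = bimodules[rule_format, unfolded bimodule_def]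

lemma zer_closed: "zer (M j) \<in> carr (M j)"
  using bimodule_axioms[of j] by auto
lemma ad_closed: "x \<in> carr (M j) \<Longrightarrow> y \<in> carr (M j) \<Longrightarrow> ad (M j) x y \<in> carr (M j)"
  using bimodule_axioms[of j] by auto
lemma sc_closed: "x \<in> carr (M j) \<Longrightarrow> sc (M j) c x \<in> carr (M j)"
  using bimodule_axioms[of j] by auto
lemma lac_closed: "x \<in> carr (M j) \<Longrightarrow> lac (M j) b x \<in> carr (M j)"
  using bimodule_axioms[of j] by auto
lemma rac_closed: "x \<in> carr (M j) \<Longrightarrow> rac (M j) x b \<in> carr (M j)"
  using bimodule_axioms[of j] by auto
lemma ad_assoc: "x \<in> carr (M j) \<Longrightarrow> y \<in> carr (M j) \<Longrightarrow> z \<in> carr (M j) \<Longrightarrow>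
    ad (M j) (ad (M j) x y) z = ad (M j) x (ad (M j) y z)"
  using bimodule_axioms[of j] by auto
lemma ad_commute: "x \<in> carr (M j) \<Longrightarrow> y \<in> carr (M j) \<Longrightarrow> ad (M j) x y = ad (M j) y x"
  using bimodule_axioms[of j] by auto
lemma ad_zer: "x \<in> carr (M j) \<Longrightarrow> ad (M j) (zer (M j)) x = x"
  using bimodule_axioms[of j] by auto
lemma ad_neg: "x \<in> carr (M j) \<Longrightarrow> ad (M j) x (sc (M j) (-1) x) = zer (M j)"
  using bimodule_axioms[of j] by auto
lemma sc_ad: "x \<in> carr (M j) \<Longrightarrow> y \<in> carr (M j) \<Longrightarrow>
    sc (M j) c (ad (M j) x y) = ad (M j) (sc (M j) c x) (sc (M j) c y)"
  using bimodule_axioms[of j] by auto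
lemma lac_add: "x \<in> carr (M j) \<Longrightarrow> lac (M j) (b + b') x = ad (M j) (lac (M j) b x) (lac (M j) b' x)"
  using bimodule_axioms[of j] by auto
lemma lac_ad: "x \<in> carr (M j) \<Longrightarrow> y \<in> carr (M j) \<Longrightarrow>
    lac (M j) b (ad (M j) x y) = ad (M j) (lac (M j) b x) (lac (M j) b y)"
  using bimodule_axioms[of j] by auto
lemma lac_mult: "x \<in> carr (M j) \<Longrightarrow> lac (M j) (b * b') x = lac (M j) b (lac (M j) b' x)"
  using bimodule_axioms[of j] by auto
lemma lac_scB: "x \<in> carr (M j) \<Longrightarrow> lac (M j) (scB c b) x = sc (M j) c (lac (M j) b x)"
  using bimodule_axioms[of j] by auto
lemma lac_sc: "x \<in> carr (M j) \<Longrightarrow> lac (M j) b (sc (M j) c x) = sc (M j) c (lac (M j) b x)"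
  using bimodule_axioms[of j] by auto
lemma lac_rac: "x \<in> carr (M j) \<Longrightarrow> lac (M j) b (rac (M j) x b') = rac (M j) (lac (M j) b x) b'"
  using bimodule_axioms[of j] by auto

lemma ad_zer_zer: "ad (M j) (zer (M j)) (zer (M j)) = zer (M j)"
  by (simp add: ad_zer zer_closed)

lemma sc_zer: "sc (M j) c (zer (M j)) = zer (M j)"
proof -
  let ?z = "zer (M j)" and ?u = "sc (M j) c (zer (M j))"
  have u: "?u \<in> carr (M j)" by (simp add: sc_closed zer_closed)
  have neg_u: "sc (M j) (-1) ?u \<in> carr (M j)" by (simp add: sc_closed u)
  have idem: "ad (M j) ?u ?u = ?u" using sc_ad[OF zer_closed zer_closed, of j c] ad_zer_zer[of j] by simp
  have "?z = ad (M j) ?u (sc (M j) (-1) ?u)" by (simp add: ad_neg u)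
  also have "\<dots> = ad (M j) (ad (M j) ?u ?u) (sc (M j) (-1) ?u)" using idem by simp
  also have "\<dots> = ad (M j) ?u (ad (M j) ?u (sc (M j) (-1) ?u))" using ad_assoc[OF u u neg_u] .
  also have "\<dots> = ad (M j) ?u ?z" by (simp add: ad_neg u)
  also have "\<dots> = ?u" using ad_commute[OF u zer_closed] ad_zer[OF u] by simp
  finally show ?thesis by simp
qed

end

definition fsupp :: "('i, 'm) fvec \<Rightarrow> ('i, 'm) word set" where
  "fsupp f = {w. f w \<noteq> 0}"

lemma fadd_eq_plus: "fadd f g = f + g"
  by (simp add: fadd_def fun_eq_iff)

lemma fsc_minus_one: "fsc (-1) f = - f"
  by (simp add: fsc_def fun_eq_iff)

lemma fsc_plus: "fsc c (f + g) = fsc c f + fsc c g"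
  by (simp add: fsc_def fun_eq_iff algebra_simps)

lemma fsc_zero: "fsc c 0 = 0"
  by (simp add: fsc_def fun_eq_iff)

lemma fsc_diff: "fsc c (f - g) = fsc c f - fsc c g"
  by (simp add: fsc_def fun_eq_iff algebra_simps)

lemma finite_fsupp_plus: "finite (fsupp f) \<Longrightarrow> finite (fsupp g) \<Longrightarrow> finite (fsupp (f + g))"
  by (rule finite_subset[of _ "fsupp f \<union> fsupp g"]) (auto simp: fsupp_def)

lemma finite_fsupp_diff: "finite (fsupp f) \<Longrightarrow> finite (fsupp g) \<Longrightarrow> finite (fsupp (f - g))"
  by (rule finite_subset[of _ "fsupp f \<union> fsupp g"]) (auto simp: fsupp_def)

lemma finite_fsupp_uminus: "finite (fsupp f) \<Longrightarrow> finite (fsupp (- f))"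
  by (simp add: fsupp_def)

lemma finite_fsupp_fsc: "finite (fsupp f) \<Longrightarrow> finite (fsupp (fsc c f))"
  by (rule finite_subset[of _ "fsupp f"]) (auto simp: fsupp_def fsc_def)

lemma finite_fsupp_delta: "finite (fsupp (delta w))"
  by (rule finite_subset[of _ "{w}"]) (auto simp: fsupp_def delta_def)

lemma fsupp_delta: "fsupp (delta u) \<subseteq> {u}"
  by (auto simp: fsupp_def delta_def)

lemma fsupp_delta_plus: "fsupp (delta u + delta u') \<subseteq> {u, u'}"
  by (auto simp: fsupp_def delta_def)

lemma FV_iff: "f \<in> FV M \<longleftrightarrow> finite (fsupp f) \<and> (\<forall>w\<in>fsupp f. wordv M w)"
  by (auto simp: FV_def fsupp_def)

lemma FV_zero: "0 \<in> FV M"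
  by (simp add: FV_iff fsupp_def)

lemma FV_delta: "wordv M w \<Longrightarrow> delta w \<in> FV M"
  using fsupp_delta[of w] finite_fsupp_delta[of w] by (auto simp: FV_iff)

lemma FV_plus:
  assumes "f \<in> FV M" "g \<in> FV M"
  shows "f + g \<in> FV M"
proof -
  have "fsupp (f + g) \<subseteq> fsupp f \<union> fsupp g" by (auto simp: fsupp_def)
  then show ?thesis using assms finite_fsupp_plus unfolding FV_iff by blast
qed

lemma FV_fsc: "f \<in> FV M \<Longrightarrow> fsc c f \<in> FV M"
  using finite_fsupp_fsc[of f c] by (auto simp: FV_iff fsupp_def fsc_def)

subsection \<open>The relation subspace\<close>

lemma zero_in_NSp: "0 \<in> NSp M"
  using NSp_zero[of M] by (simp add: zero_fun_def)

lemma NSp_plus: "f \<in> NSp M \<Longrightarrow> g \<in> NSp M \<Longrightarrow> f + g \<in> NSp M"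
  using NSp_add[of f M g] by (simp add: fadd_eq_plus)

lemma NSp_uminus: "f \<in> NSp M \<Longrightarrow> - f \<in> NSp M"
  using NSp_sc[of f M "-1"] by (simp add: fsc_minus_one)

lemma NSp_diff: "f \<in> NSp M \<Longrightarrow> g \<in> NSp M \<Longrightarrow> f - g \<in> NSp M"
  using NSp_plus[of f M "- g"] NSp_uminus[of g M] by simp

lemma finite_fsupp_NSp: "f \<in> NSp M \<Longrightarrow> finite (fsupp f)"
proof (induction rule: NSp.induct)
  case NSp_zero
  show ?case by (simp add: fsupp_def)
next
  case (NSp_rel g)
  then show ?case
    unfolding Rel_def by (auto simp: fadd_eq_plus intro!: finite_fsupp_plus finite_fsupp_fsc finite_fsupp_delta)
qed (simp_all only: fadd_eq_plus finite_fsupp_plus finite_fsupp_fsc)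

lemma Rel_cases:
  assumes "g \<in> Rel M"
  obtains (additive) w k j x y where
      "wordv M w" "k < length w" "fst (w ! k) = j" "x \<in> carr (M j)" "y \<in> carr (M j)"
      "g = delta (w[k := (j, ad (M j) x y)]) - delta (w[k := (j, x)]) - delta (w[k := (j, y)])"
  | (homogeneous) w k j x c where
      "wordv M w" "k < length w" "fst (w ! k) = j" "x \<in> carr (M j)"
      "g = delta (w[k := (j, sc (M j) c x)]) - fsc c (delta (w[k := (j, x)]))"
  | (balanced) w k j j' x y b where
      "wordv M w" "Suc k < length w" "fst (w ! k) = j" "fst (w ! Suc k) = j'"
      "x \<in> carr (M j)" "y \<in> carr (M j')"
      "g = delta (w[k := (j, rac (M j) x b), Suc k := (j', y)])
         - delta (w[k := (j, x), Suc k := (j', lac (M j') b y)])"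
  using assms unfolding Rel_def
  by (elim UnE CollectE exE conjE)
     (simp_all add: fadd_eq_plus fsc_minus_one fsc_def fun_eq_iff, metis+)

lemma NSp_additive:
  assumes "wordv M w" "k < length w" "fst (w ! k) = j" "x \<in> carr (M j)" "y \<in> carr (M j)"
  shows "delta (w[k := (j, ad (M j) x y)]) - delta (w[k := (j, x)]) - delta (w[k := (j, y)]) \<in> NSp M"
proof -
  have "fadd (delta (w[k := (j, ad (M j) x y)]))
      (fsc (-1) (fadd (delta (w[k := (j, x)])) (delta (w[k := (j, y)])))) \<in> Rel M"
    unfolding Rel_def using assms by blast
  then show ?thesis
    by (auto dest: NSp_rel simp: fadd_eq_plus fsc_minus_one algebra_simps)
qed

lemma NSp_homogeneous:
  assumes "wordv M w" "k < length w" "fst (w ! k) = j" "x \<in> carr (M j)"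
  shows "delta (w[k := (j, sc (M j) c x)]) - fsc c (delta (w[k := (j, x)])) \<in> NSp M"
proof -
  have "fadd (delta (w[k := (j, sc (M j) c x)])) (fsc (- c) (delta (w[k := (j, x)]))) \<in> Rel M"
    unfolding Rel_def using assms by blast
  moreover have "fadd (delta (w[k := (j, sc (M j) c x)])) (fsc (- c) (delta (w[k := (j, x)])))
      = delta (w[k := (j, sc (M j) c x)]) - fsc c (delta (w[k := (j, x)]))"
    by (simp add: fadd_def fsc_def fun_eq_iff)
  ultimately show ?thesis using NSp_rel by metis
qed

lemma NSp_balanced:
  assumes "wordv M w" "Suc k < length w" "fst (w ! k) = j" "fst (w ! Suc k) = j'"
    "x \<in> carr (M j)" "y \<in> carr (M j')"
  shows "delta (w[k := (j, rac (M j) x b), Suc k := (j', y)])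
       - delta (w[k := (j, x), Suc k := (j', lac (M j') b y)]) \<in> NSp M"
proof -
  have "fadd (delta (w[k := (j, rac (M j) x b), Suc k := (j', y)]))
      (fsc (-1) (delta (w[k := (j, x), Suc k := (j', lac (M j') b y)]))) \<in> Rel M"
    unfolding Rel_def using assms by blast
  then show ?thesis
    by (auto dest: NSp_rel simp: fadd_eq_plus fsc_minus_one algebra_simps)
qed

lemma linear_image_NSp:
  fixes L :: "('i, 'm) fvec \<Rightarrow> 'v::ab_group_add"
  assumes add: "\<And>f g. finite (fsupp f) \<Longrightarrow> finite (fsupp g) \<Longrightarrow> L (f + g) = L f + L g"
    and scale: "\<And>c f. finite (fsupp f) \<Longrightarrow> L (fsc c f) = s c (L f)"
    and V: "0 \<in> V" "\<And>x y. x \<in> V \<Longrightarrow> y \<in> V \<Longrightarrow> x + y \<in> V" "\<And>c x. x \<in> V \<Longrightarrow> s c x \<in> V"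
    and rel: "\<And>g. g \<in> Rel M \<Longrightarrow> L g \<in> V"
    and n: "n \<in> NSp M"
  shows "L n \<in> V"
  using n
proof (induction rule: NSp.induct)
  case NSp_zero
  have "L 0 = L 0 + L 0" using add[of 0 0] by (simp add: fsupp_def)
  then show ?case using V(1) by (simp add: zero_fun_def[symmetric])
next
  case (NSp_add f g)
  have "L (f + g) = L f + L g"
    using add finite_fsupp_NSp[OF NSp_add.hyps(1)] finite_fsupp_NSp[OF NSp_add.hyps(2)] by blast
  then show ?case using V(2)[OF NSp_add.IH] fadd_eq_plus by metis
next
  case (NSp_sc f c)
  then show ?case using scale[OF finite_fsupp_NSp[OF NSp_sc.hyps]] V(3) by simp
qed (rule rel)

lemma wordv_Cons:
  "wordv M ((j, x) # r) \<longleftrightarrow> x \<in> carr (M j) \<and> (r = [] \<or> wordv M r \<and> fst (hd r) \<noteq> j)"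
proof
  assume w: "wordv M ((j, x) # r)"
  have tail: "wordv M r" if "r \<noteq> []"
    using w that unfolding wordv_def by (metis Suc_less_eq length_Cons nth_Cons_Suc)
  have "fst (hd r) \<noteq> j" if "r \<noteq> []"
    using w that unfolding wordv_def
    by (metis fst_conv hd_conv_nth length_Cons length_greater_0_conv nth_Cons_0 nth_Cons_Suc Suc_less_eq)
  moreover have "x \<in> carr (M j)" using w unfolding wordv_def by force
  ultimately show "x \<in> carr (M j) \<and> (r = [] \<or> wordv M r \<and> fst (hd r) \<noteq> j)" using tail by blast
next
  assume h: "x \<in> carr (M j) \<and> (r = [] \<or> wordv M r \<and> fst (hd r) \<noteq> j)"
  show "wordv M ((j, x) # r)"
    unfolding wordv_def
  proof (intro conjI allI impI)
    fix k assume k: "k < length ((j, x) # r)"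
    show "snd (((j, x) # r) ! k) \<in> carr (M (fst (((j, x) # r) ! k)))"
      using h k unfolding wordv_def by (cases k) auto
  next
    fix k assume k: "Suc k < length ((j, x) # r)"
    show "fst (((j, x) # r) ! k) \<noteq> fst (((j, x) # r) ! Suc k)"
      using h k unfolding wordv_def by (cases k; cases r) auto
  qed simp
qed

lemma wordv_nonempty: "wordv M w \<Longrightarrow> w \<noteq> []"
  by (simp add: wordv_def)

lemma wordv_single: "x \<in> carr (M j) \<Longrightarrow> wordv M [(j, x)]"
  by (simp add: wordv_Cons)

lemma wordv_Cons_word:
  "wordv M w \<Longrightarrow> fst (hd w) \<noteq> j0 \<Longrightarrow> v0 \<in> carr (M j0) \<Longrightarrow> wordv M ((j0, v0) # w)"
  by (simp add: wordv_Cons)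

lemma hd_update: "k < length w \<Longrightarrow> fst (w ! k) = j \<Longrightarrow> fst (hd (w[k := (j, v)])) = fst (hd w)"
  by (cases w; cases k) auto

lemma update_nonempty: "w \<noteq> [] \<Longrightarrow> w[k := q] \<noteq> []"
  by (cases w; cases k) auto

lemma wl_Cons [simp]: "wl M c ((j, x) # r) = (j, lac (M j) c x) # r"
  by (simp add: wl_def)

lemma length_wl [simp]: "length (wl M c w) = length w"
  by (cases w) (auto simp: wl_def)

lemma nth_wl: "k \<noteq> 0 \<Longrightarrow> wl M c w ! k = w ! k"
  by (cases w; cases k) (auto simp: wl_def)

lemma hd_wl: "w \<noteq> [] \<Longrightarrow> fst (hd (wl M c w)) = fst (hd w)"
  by (cases w) (auto simp: wl_def)

lemma wl_update: "k < length w \<Longrightarrow> k \<noteq> 0 \<Longrightarrow> wl M c (w[k := q]) = (wl M c w)[k := q]"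
  by (cases w; cases k) (auto simp: wl_def)

lemma wl_update_0: "w \<noteq> [] \<Longrightarrow> wl M c (w[0 := (j, v)]) = w[0 := (j, lac (M j) c v)]"
  by (cases w) auto

context bimodule_family
begin

lemma wordv_wl: "wordv M w \<Longrightarrow> wordv M (wl M c w)"
  by (cases w) (auto simp: lac_closed wordv_Cons dest: wordv_nonempty)

lemma NSp_additive_wl:
  assumes "wordv M w" "k < length w" "fst (w ! k) = j" "x \<in> carr (M j)" "y \<in> carr (M j)"
  shows "delta (wl M c (w[k := (j, ad (M j) x y)])) - delta (wl M c (w[k := (j, x)]))
       - delta (wl M c (w[k := (j, y)])) \<in> NSp M"
proof (cases "k = 0")
  case True
  have "w \<noteq> []" using assms wordv_nonempty by blast
  then show ?thesis
    using NSp_additive[OF assms(1) _ _ lac_closed lac_closed] assms True by (simp add: wl_update_0 lac_ad)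
next
  case False
  then show ?thesis
    using NSp_additive[OF wordv_wl[OF assms(1)]] assms by (simp add: nth_wl wl_update)
qed

lemma NSp_homogeneous_wl:
  assumes "wordv M w" "k < length w" "fst (w ! k) = j" "x \<in> carr (M j)"
  shows "delta (wl M c (w[k := (j, sc (M j) d x)])) - fsc d (delta (wl M c (w[k := (j, x)]))) \<in> NSp M"
proof (cases "k = 0")
  case True
  have "w \<noteq> []" using assms wordv_nonempty by blast
  then show ?thesis
    using NSp_homogeneous[OF assms(1) _ _ lac_closed] assms True by (simp add: wl_update_0 lac_sc)
next
  case False
  then show ?thesis
    using NSp_homogeneous[OF wordv_wl[OF assms(1)]] assms by (simp add: nth_wl wl_update)
qed

lemma NSp_balanced_wl:
  assumes "wordv M w" "Suc k < length w" "fst (w ! k) = j" "fst (w ! Suc k) = j'"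
    "x \<in> carr (M j)" "y \<in> carr (M j')"
  shows "delta (wl M c (w[k := (j, rac (M j) x e), Suc k := (j', y)]))
       - delta (wl M c (w[k := (j, x), Suc k := (j', lac (M j') e y)])) \<in> NSp M"
proof (cases "k = 0")
  case True
  have "w \<noteq> []" using assms wordv_nonempty by blast
  then have "wl M c (w[0 := (j, rac (M j) x e), Suc 0 := (j', y)])
      = w[0 := (j, rac (M j) (lac (M j) c x) e), Suc 0 := (j', y)]"
    "wl M c (w[0 := (j, x), Suc 0 := (j', lac (M j') e y)])
      = w[0 := (j, lac (M j) c x), Suc 0 := (j', lac (M j') e y)]"
    using assms by (cases w; auto simp: lac_rac)+
  then show ?thesis
    using NSp_balanced[OF assms(1) _ _ _ lac_closed assms(6)] assms True by simp
next
  case False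
  then show ?thesis
    using NSp_balanced[OF wordv_wl[OF assms(1)]] assms by (simp add: nth_wl wl_update)
qed

end

definition single_letter :: "'i \<Rightarrow> ('i, 'm) word \<Rightarrow> bool" where
  "single_letter i w \<longleftrightarrow> length w = 1 \<and> fst (hd w) = i"

definition restrict_letters :: "'i \<Rightarrow> ('i, 'm) fvec \<Rightarrow> ('i, 'm) fvec" where
  "restrict_letters i f = (\<lambda>w. if single_letter i w then f w else 0)"

lemma restrict_letters_plus: "restrict_letters i (f + g) = restrict_letters i f + restrict_letters i g"
  by (simp add: restrict_letters_def fun_eq_iff)

lemma restrict_letters_diff: "restrict_letters i (f - g) = restrict_letters i f - restrict_letters i g"
  by (simp add: restrict_letters_def fun_eq_iff)

lemma restrict_letters_fsc: "restrict_letters i (fsc c f) = fsc c (restrict_letters i f)"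
  by (simp add: restrict_letters_def fun_eq_iff fsc_def)

lemma restrict_letters_idem: "restrict_letters i (restrict_letters i f) = restrict_letters i f"
  by (simp add: restrict_letters_def fun_eq_iff)

lemma restrict_letters_delta:
  "restrict_letters i (delta u) = (if single_letter i u then delta u else 0)"
  by (auto simp: restrict_letters_def fun_eq_iff delta_def)

lemma FV_restrict_letters: "f \<in> FV M \<Longrightarrow> restrict_letters i f \<in> FV M"
  by (auto simp: FV_iff restrict_letters_def fsupp_def intro: finite_subset[of _ "{w. f w \<noteq> 0}"])

lemma single_letter_update:
  "k < length w \<Longrightarrow> fst (w ! k) = j \<Longrightarrow> single_letter i (w[k := (j, v)]) = single_letter i w"
  by (simp add: single_letter_def hd_update)

lemma restrict_letters_NSp:
  assumes "n \<in> NSp M"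
  shows "restrict_letters i n \<in> NSp M"
proof (rule linear_image_NSp[where s = fsc, OF _ _ _ _ _ _ assms])
  fix g assume "g \<in> Rel M"
  then show "restrict_letters i g \<in> NSp M"
  proof (cases rule: Rel_cases)
    case (additive w k j x y)
    then have "restrict_letters i g = (if single_letter i w then g else 0)"
      by (simp add: restrict_letters_diff restrict_letters_delta single_letter_update)
    then show ?thesis using NSp_additive[OF additive(1-5)] additive(6) zero_in_NSp by auto
  next
    case (homogeneous w k j x c)
    then have "restrict_letters i g = (if single_letter i w then g else 0)"
      by (simp add: restrict_letters_diff restrict_letters_fsc restrict_letters_delta
          single_letter_update fsc_zero)
    then show ?thesis using NSp_homogeneous[OF homogeneous(1-4)] homogeneous(5) zero_in_NSp by auto
  next
    case (balanced w k j j' x y b)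
    then show ?thesis
      by (simp add: restrict_letters_diff restrict_letters_delta single_letter_def zero_in_NSp)
  qed
qed (simp_all only: restrict_letters_plus restrict_letters_fsc zero_in_NSp NSp_plus NSp_sc)

lemma lext_eq_sum:
  "finite S \<Longrightarrow> fsupp f \<subseteq> S \<Longrightarrow> lext \<phi> f = (\<lambda>v. \<Sum>w\<in>S. f w * \<phi> w v)"
  unfolding lext_def fun_eq_iff by (intro allI sum.mono_neutral_left) (auto simp: fsupp_def)

lemma lext_plus:
  assumes "finite (fsupp f)" "finite (fsupp g)"
  shows "lext \<phi> (f + g) = lext \<phi> f + lext \<phi> g"
proof -
  let ?S = "fsupp f \<union> fsupp g"
  have "lext \<phi> (f + g) = (\<lambda>v. \<Sum>w\<in>?S. (f + g) w * \<phi> w v)"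
    "lext \<phi> f = (\<lambda>v. \<Sum>w\<in>?S. f w * \<phi> w v)" "lext \<phi> g = (\<lambda>v. \<Sum>w\<in>?S. g w * \<phi> w v)"
    by (rule lext_eq_sum; use assms in \<open>auto simp: fsupp_def\<close>)+
  then show ?thesis by (simp add: fun_eq_iff distrib_right sum.distrib)
qed

lemma lext_fsc:
  assumes "finite (fsupp f)"
  shows "lext \<phi> (fsc c f) = fsc c (lext \<phi> f)"
proof -
  have "lext \<phi> (fsc c f) = (\<lambda>v. \<Sum>w\<in>fsupp f. fsc c f w * \<phi> w v)"
    "lext \<phi> f = (\<lambda>v. \<Sum>w\<in>fsupp f. f w * \<phi> w v)"
    by (rule lext_eq_sum; use assms in \<open>auto simp: fsupp_def fsc_def\<close>)+
  then show ?thesis by (simp add: fun_eq_iff fsc_def sum_distrib_left mult.assoc)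
qed

lemma lext_diff:
  assumes "finite (fsupp f)" "finite (fsupp g)"
  shows "lext \<phi> (f - g) = lext \<phi> f - lext \<phi> g"
  using lext_plus[of f "- g" \<phi>] lext_fsc[of g \<phi> "-1"] assms
  by (simp add: fsc_minus_one finite_fsupp_uminus)

lemma lext_delta: "lext \<phi> (delta w) = \<phi> w"
proof -
  have "lext \<phi> (delta w) = (\<lambda>v. \<Sum>u\<in>{w}. delta w u * \<phi> u v)"
    by (rule lext_eq_sum) (auto simp: fsupp_def delta_def)
  then show ?thesis by (simp add: delta_def)
qed

lemma fsupp_lext: "v \<in> fsupp (lext \<phi> f) \<Longrightarrow> \<exists>w\<in>fsupp f. v \<in> fsupp (\<phi> w)"
proof -
  assume "v \<in> fsupp (lext \<phi> f)"
  then have "(\<Sum>w\<in>fsupp f. f w * \<phi> w v) \<noteq> 0" by (simp add: fsupp_def lext_def)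
  then obtain w where "w \<in> fsupp f" "f w * \<phi> w v \<noteq> 0"
    using sum.not_neutral_contains_not_neutral by blast
  then show ?thesis by (auto simp: fsupp_def)
qed

lemma finite_fsupp_lext:
  assumes "finite (fsupp f)" "\<And>w. finite (fsupp (\<phi> w))"
  shows "finite (fsupp (lext \<phi> f))"
proof -
  have "fsupp (lext \<phi> f) \<subseteq> (\<Union>w\<in>fsupp f. fsupp (\<phi> w))"
    using fsupp_lext by blast
  then show ?thesis using assms by (meson finite_UN_I finite_subset)
qed

context bimodule_family
begin

lemma opL_closed: "a \<in> opL scB (M j) \<Longrightarrow> x \<in> carr (M j) \<Longrightarrow> snd (a (b0, x)) \<in> carr (M j)"
  unfolding opL_def pcar_def by (auto simp: Pi_def mem_Times_iff)

lemma opL_add: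
  assumes "a \<in> opL scB (M j)" "x \<in> carr (M j)" "y \<in> carr (M j)"
  shows "a (b0 + b1, ad (M j) x y)
    = (fst (a (b0, x)) + fst (a (b1, y)), ad (M j) (snd (a (b0, x))) (snd (a (b1, y))))"
proof -
  have "a (padd (M j) (b0, x) (b1, y)) = padd (M j) (a (b0, x)) (a (b1, y))"
    using assms unfolding opL_def pcar_def by auto
  then show ?thesis by (simp add: padd_def)
qed

lemma opL_ad:
  assumes "a \<in> opL scB (M j)" "x \<in> carr (M j)" "y \<in> carr (M j)"
  shows "a (0, ad (M j) x y)
    = (fst (a (0, x)) + fst (a (0, y)), ad (M j) (snd (a (0, x))) (snd (a (0, y))))"
  using opL_add[OF assms, of 0 0] by simp

lemma opL_sc:
  assumes "a \<in> opL scB (M j)" "x \<in> carr (M j)"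
  shows "a (scB c b0, sc (M j) c x) = (scB c (fst (a (b0, x))), sc (M j) c (snd (a (b0, x))))"
proof -
  have "a (psc scB (M j) c (b0, x)) = psc scB (M j) c (a (b0, x))"
    using assms unfolding opL_def pcar_def by auto
  then show ?thesis by (simp add: psc_def)
qed

lemma opL_sc_0:
  assumes "a \<in> opL scB (M j)" "x \<in> carr (M j)"
  shows "a (0, sc (M j) c x) = (scB c (fst (a (0, x))), sc (M j) c (snd (a (0, x))))"
  using opL_sc[OF assms, of c 0] by (simp add: scB_zero)

lemma opL_rac:
  assumes "a \<in> opL scB (M j)" "x \<in> carr (M j)"
  shows "a (0, rac (M j) x e) = (fst (a (0, x)) * e, rac (M j) (snd (a (0, x))) e)"
proof -
  have "a (prac (M j) (0, x) e) = prac (M j) (a (0, x)) e"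
    using assms unfolding opL_def pcar_def by auto
  then show ?thesis by (simp add: prac_def)
qed

lemma opL_compose:
  assumes a: "a \<in> opL scB (M j)" and b: "b \<in> opL scB (M j)"
  shows "compose (pcar (M j)) a b \<in> opL scB (M j)"
  unfolding opL_def
proof (intro CollectI conjI ballI allI)
  have maps: "a \<in> pcar (M j) \<rightarrow> pcar (M j)" "b \<in> pcar (M j) \<rightarrow> pcar (M j)"
    using a b by (auto simp: opL_def)
  show "compose (pcar (M j)) a b \<in> pcar (M j) \<rightarrow> pcar (M j)"
    using funcset_compose[OF maps(2) maps(1)] .
  have b_closed: "b p \<in> pcar (M j)" if "p \<in> pcar (M j)" for p
    using maps(2) that by blast
  show "compose (pcar (M j)) a b (padd (M j) p q)
      = padd (M j) (compose (pcar (M j)) a b p) (compose (pcar (M j)) a b q)"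
    if p: "p \<in> pcar (M j)" and q: "q \<in> pcar (M j)" for p q
  proof -
    have "padd (M j) p q \<in> pcar (M j)" using p q by (auto simp: pcar_def padd_def ad_closed)
    then show ?thesis using a b p q b_closed by (simp add: compose_eq opL_def)
  qed
  show "compose (pcar (M j)) a b (psc scB (M j) c p) = psc scB (M j) c (compose (pcar (M j)) a b p)"
    if p: "p \<in> pcar (M j)" for c p
  proof -
    have "psc scB (M j) c p \<in> pcar (M j)" using p by (auto simp: pcar_def psc_def sc_closed)
    then show ?thesis using a b p b_closed by (simp add: compose_eq opL_def)
  qed
  show "compose (pcar (M j)) a b (plac (M j) e p) = plac (M j) e (compose (pcar (M j)) a b p)"
    if p: "p \<in> pcar (M j)" for e p
  proof -
    have "plac (M j) e p \<in> pcar (M j)" using p by (auto simp: pcar_def plac_def lac_closed)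
    then show ?thesis using a b p b_closed by (simp add: compose_eq opL_def)
  qed
  show "compose (pcar (M j)) a b (prac (M j) p e) = prac (M j) (compose (pcar (M j)) a b p) e"
    if p: "p \<in> pcar (M j)" for e p
  proof -
    have "prac (M j) p e \<in> pcar (M j)" using p by (auto simp: pcar_def prac_def rac_closed)
    then show ?thesis using a b p b_closed by (simp add: compose_eq opL_def)
  qed
qed simp

end

subsection \<open>Lifting \<open>\<lambda>\<^sub>i(a)\<close> to free vectors\<close>

lemma lamw_single: "lamw M i a [(i, x)] = (fst (a (0, x)), delta [(i, snd (a (0, x)))])"
  by (simp add: lamw_def split_def Let_def)

lemma lamw_Cons_same:
  "r \<noteq> [] \<Longrightarrow> lamw M i a ((i, x) # r)
    = (0, delta (wl M (fst (a (0, x))) r) + delta ((i, snd (a (0, x))) # r))"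
  by (simp add: lamw_def split_def Let_def fadd_eq_plus)

lemma lamw_other:
  "w \<noteq> [] \<Longrightarrow> fst (hd w) \<noteq> i \<Longrightarrow> lamw M i a w
    = (0, delta (wl M (fst (a (1, zer (M i)))) w) + delta ((i, snd (a (1, zer (M i)))) # w))"
  by (simp add: lamw_def split_def Let_def fadd_eq_plus)

lemma fst_lamw:
  "w \<noteq> [] \<Longrightarrow> fst (lamw M i a w) = (if single_letter i w then fst (a (0, snd (hd w))) else 0)"
  by (cases w) (simp_all add: lamw_def split_def Let_def single_letter_def)

locale free_factor = bimodule_family scB M
  for scB :: "complex \<Rightarrow> 'b::ring_1 \<Rightarrow> 'b" and M :: "'i \<Rightarrow> ('b, 'm) bimod" +
  fixes i :: 'i
begin

lemma NSp_additive_single: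
  "x \<in> carr (M i) \<Longrightarrow> y \<in> carr (M i) \<Longrightarrow> delta [(i, ad (M i) x y)] - delta [(i, x)] - delta [(i, y)] \<in> NSp M"
  using NSp_additive[of M "[(i, x)]" 0 i x y] wordv_single[of x M i] by simp

lemma NSp_homogeneous_single:
  "x \<in> carr (M i) \<Longrightarrow> delta [(i, sc (M i) c x)] - fsc c (delta [(i, x)]) \<in> NSp M"
  using NSp_homogeneous[of M "[(i, x)]" 0 i x c] wordv_single[of x M i] by simp

text \<open>The image of \<open>(c, e) \<otimes> u\<close> under \<open>X\<^sub>i \<otimes>\<^sub>B X(i) \<cong> X\<close>, for \<open>(c, e) \<in> B \<oplus> X\<ring>\<^sub>i\<close>
  and a word \<open>u\<close> not starting in \<open>i\<close>.\<close>

definition tensor_word :: "'b \<Rightarrow> 'm \<Rightarrow> ('i, 'm) word \<Rightarrow> ('i, 'm) fvec" where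
  "tensor_word c e u = delta (wl M c u) + delta ((i, e) # u)"

lemma tensor_additive_left:
  assumes u: "wordv M u" "fst (hd u) \<noteq> i" and e: "e \<in> carr (M i)" "e' \<in> carr (M i)"
  shows "tensor_word (c + c') (ad (M i) e e') u - tensor_word c e u - tensor_word c' e' u \<in> NSp M"
proof -
  obtain j1 y1 r where u1: "u = (j1, y1) # r" using wordv_nonempty[OF u(1)] by (cases u) auto
  have y1: "y1 \<in> carr (M j1)" using u(1) u1 by (simp add: wordv_Cons)
  have "tensor_word (c + c') (ad (M i) e e') u - tensor_word c e u - tensor_word c' e' u =
      (delta (u[0 := (j1, ad (M j1) (lac (M j1) c y1) (lac (M j1) c' y1))])
        - delta (u[0 := (j1, lac (M j1) c y1)]) - delta (u[0 := (j1, lac (M j1) c' y1)]))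
    + (delta (((i, e) # u)[0 := (i, ad (M i) e e')]) - delta (((i, e) # u)[0 := (i, e)])
        - delta (((i, e) # u)[0 := (i, e')]))"
    using u1 by (simp add: tensor_word_def lac_add[OF y1] algebra_simps)
  also have "\<dots> \<in> NSp M"
    using u u1 y1 e by (intro NSp_plus NSp_additive) (auto simp: lac_closed wordv_Cons)
  finally show ?thesis .
qed

lemma tensor_homogeneous_left:
  assumes u: "wordv M u" "fst (hd u) \<noteq> i" and e: "e \<in> carr (M i)"
  shows "tensor_word (scB d c) (sc (M i) d e) u - fsc d (tensor_word c e u) \<in> NSp M"
proof -
  obtain j1 y1 r where u1: "u = (j1, y1) # r" using wordv_nonempty[OF u(1)] by (cases u) auto
  have y1: "y1 \<in> carr (M j1)" using u(1) u1 by (simp add: wordv_Cons)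
  have "tensor_word (scB d c) (sc (M i) d e) u - fsc d (tensor_word c e u) =
      (delta (u[0 := (j1, sc (M j1) d (lac (M j1) c y1))]) - fsc d (delta (u[0 := (j1, lac (M j1) c y1)])))
    + (delta (((i, e) # u)[0 := (i, sc (M i) d e)]) - fsc d (delta (((i, e) # u)[0 := (i, e)])))"
    using u1 by (simp add: tensor_word_def lac_scB[OF y1] fsc_plus algebra_simps)
  also have "\<dots> \<in> NSp M"
    using u u1 y1 e by (intro NSp_plus NSp_homogeneous) (auto simp: lac_closed wordv_Cons)
  finally show ?thesis .
qed

lemma tensor_balanced:
  assumes u: "wordv M u" "fst (hd u) \<noteq> i" and e: "e \<in> carr (M i)"
  shows "tensor_word (c * b) (rac (M i) e b) u - tensor_word c e (wl M b u) \<in> NSp M"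
proof -
  obtain j1 y1 r where u1: "u = (j1, y1) # r" using wordv_nonempty[OF u(1)] by (cases u) auto
  have y1: "y1 \<in> carr (M j1)" using u(1) u1 by (simp add: wordv_Cons)
  have "tensor_word (c * b) (rac (M i) e b) u - tensor_word c e (wl M b u)
    = delta (((i, e) # u)[0 := (i, rac (M i) e b), Suc 0 := (j1, y1)])
    - delta (((i, e) # u)[0 := (i, e), Suc 0 := (j1, lac (M j1) b y1)])"
    using u1 by (simp add: tensor_word_def lac_mult[OF y1])
  also have "\<dots> \<in> NSp M"
    using u u1 y1 e by (intro NSp_balanced) (auto simp: wordv_Cons)
  finally show ?thesis .
qed

lemma tensor_additive_right:
  assumes u: "wordv M u" "fst (hd u) \<noteq> i" and e: "e \<in> carr (M i)"
    and k: "k < length u" "fst (u ! k) = j" and xy: "x \<in> carr (M j)" "y \<in> carr (M j)"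
  shows "tensor_word c e (u[k := (j, ad (M j) x y)]) - tensor_word c e (u[k := (j, x)])
       - tensor_word c e (u[k := (j, y)]) \<in> NSp M"
proof -
  have "tensor_word c e (u[k := (j, ad (M j) x y)]) - tensor_word c e (u[k := (j, x)])
      - tensor_word c e (u[k := (j, y)]) =
    (delta (wl M c (u[k := (j, ad (M j) x y)])) - delta (wl M c (u[k := (j, x)]))
      - delta (wl M c (u[k := (j, y)])))
    + (delta (((i, e) # u)[Suc k := (j, ad (M j) x y)]) - delta (((i, e) # u)[Suc k := (j, x)])
      - delta (((i, e) # u)[Suc k := (j, y)]))"
    by (simp add: tensor_word_def algebra_simps)
  also have "\<dots> \<in> NSp M"
    using NSp_additive_wl[OF u(1) k xy] wordv_Cons_word[OF u e] k xy
    by (intro NSp_plus NSp_additive) simp_all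
  finally show ?thesis .
qed

lemma tensor_homogeneous_right:
  assumes u: "wordv M u" "fst (hd u) \<noteq> i" and e: "e \<in> carr (M i)"
    and k: "k < length u" "fst (u ! k) = j" and x: "x \<in> carr (M j)"
  shows "tensor_word c e (u[k := (j, sc (M j) d x)]) - fsc d (tensor_word c e (u[k := (j, x)])) \<in> NSp M"
proof -
  have "tensor_word c e (u[k := (j, sc (M j) d x)]) - fsc d (tensor_word c e (u[k := (j, x)])) =
    (delta (wl M c (u[k := (j, sc (M j) d x)])) - fsc d (delta (wl M c (u[k := (j, x)]))))
    + (delta (((i, e) # u)[Suc k := (j, sc (M j) d x)]) - fsc d (delta (((i, e) # u)[Suc k := (j, x)])))"
    by (simp add: tensor_word_def fsc_plus algebra_simps)
  also have "\<dots> \<in> NSp M"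
    using NSp_homogeneous_wl[OF u(1) k x] wordv_Cons_word[OF u e] k x
    by (intro NSp_plus NSp_homogeneous) simp_all
  finally show ?thesis .
qed

lemma tensor_balanced_right:
  assumes u: "wordv M u" "fst (hd u) \<noteq> i" and e: "e \<in> carr (M i)"
    and k: "Suc k < length u" "fst (u ! k) = j" "fst (u ! Suc k) = j'"
    and xy: "x \<in> carr (M j)" "y \<in> carr (M j')"
  shows "tensor_word c e (u[k := (j, rac (M j) x b), Suc k := (j', y)])
       - tensor_word c e (u[k := (j, x), Suc k := (j', lac (M j') b y)]) \<in> NSp M"
proof -
  have "tensor_word c e (u[k := (j, rac (M j) x b), Suc k := (j', y)])
      - tensor_word c e (u[k := (j, x), Suc k := (j', lac (M j') b y)]) =
    (delta (wl M c (u[k := (j, rac (M j) x b), Suc k := (j', y)]))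
      - delta (wl M c (u[k := (j, x), Suc k := (j', lac (M j') b y)])))
    + (delta (((i, e) # u)[Suc k := (j, rac (M j) x b), Suc (Suc k) := (j', y)])
      - delta (((i, e) # u)[Suc k := (j, x), Suc (Suc k) := (j', lac (M j') b y)]))"
    by (simp add: tensor_word_def algebra_simps)
  also have "\<dots> \<in> NSp M"
    using NSp_balanced_wl[OF u(1) k xy] wordv_Cons_word[OF u e] k xy
    by (intro NSp_plus NSp_balanced) simp_all
  finally show ?thesis .
qed

definition lift_word :: "('b \<times> 'm \<Rightarrow> 'b \<times> 'm) \<Rightarrow> ('i, 'm) word \<Rightarrow> ('i, 'm) fvec" where
  "lift_word a w = snd (lamw M i a w)"

definition lift_vec :: "('b \<times> 'm \<Rightarrow> 'b \<times> 'm) \<Rightarrow> ('i, 'm) fvec \<Rightarrow> ('i, 'm) fvec" where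
  "lift_vec a f = lext (lift_word a) f"

definition lift_scalar :: "('b \<times> 'm \<Rightarrow> 'b \<times> 'm) \<Rightarrow> ('i, 'm) fvec \<Rightarrow> 'b" where
  "lift_scalar a f = (\<Sum>w\<in>fsupp f. scB (f w) (fst (lamw M i a w)))"

lemma lift_word_single: "lift_word a [(i, x)] = delta [(i, snd (a (0, x)))]"
  by (simp add: lift_word_def lamw_single)

lemma lift_word_Cons_same:
  "r \<noteq> [] \<Longrightarrow> lift_word a ((i, x) # r) = tensor_word (fst (a (0, x))) (snd (a (0, x))) r"
  by (simp add: lift_word_def lamw_Cons_same tensor_word_def)

lemma lift_word_other:
  "w \<noteq> [] \<Longrightarrow> fst (hd w) \<noteq> i \<Longrightarrow>
    lift_word a w = tensor_word (fst (a (1, zer (M i)))) (snd (a (1, zer (M i)))) w"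
  by (simp add: lift_word_def lamw_other tensor_word_def)

lemma lift_word_additive:
  assumes b: "b \<in> opL scB (M i)"
    and w: "wordv M w" "k < length w" "fst (w ! k) = j" "x \<in> carr (M j)" "y \<in> carr (M j)"
  shows "lift_word b (w[k := (j, ad (M j) x y)]) - lift_word b (w[k := (j, x)])
       - lift_word b (w[k := (j, y)]) \<in> NSp M"
proof -
  obtain j0 x0 r where w0: "w = (j0, x0) # r" using wordv_nonempty[OF w(1)] by (cases w) auto
  let ?c = "fst (b (1, zer (M i)))" and ?e = "snd (b (1, zer (M i)))"
  consider (other) "j0 \<noteq> i" | (head) "j0 = i" "k = 0" | (tail) k' where "j0 = i" "k = Suc k'"
    by (cases k) auto
  then show ?thesis
  proof cases
    case other
    have "fst (hd w) \<noteq> i" using other w0 by simp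
    moreover have "lift_word b (w[k := (j, v)]) = tensor_word ?c ?e (w[k := (j, v)])" for v
      using lift_word_other[OF update_nonempty[OF wordv_nonempty[OF w(1)]]] hd_update[OF w(2,3)] other w0
      by simp
    ultimately show ?thesis
      using tensor_additive_right[OF w(1) _ opL_closed[OF b zer_closed] w(2-5)] by simp
  next
    case head
    then have ji: "j = i" using w(3) w0 by simp
    then have xy: "x \<in> carr (M i)" "y \<in> carr (M i)" using w by auto
    show ?thesis
    proof (cases "r = []")
      case True
      then show ?thesis
        using NSp_additive_single[OF opL_closed[OF b xy(1), of 0] opL_closed[OF b xy(2), of 0]] w0 head ji
        by (simp add: lift_word_single opL_ad[OF b xy])
    next
      case False
      have "wordv M r" "fst (hd r) \<noteq> i" using w(1) w0 head False by (auto simp: wordv_Cons)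
      then show ?thesis
        using tensor_additive_left[OF _ _ opL_closed[OF b xy(1)] opL_closed[OF b xy(2)]] w0 head ji False
        by (simp add: lift_word_Cons_same opL_ad[OF b xy])
    qed
  next
    case tail
    have r: "wordv M r" "fst (hd r) \<noteq> i" and x0: "x0 \<in> carr (M i)"
      using w w0 tail by (auto simp: wordv_Cons)
    have "k' < length r" "fst (r ! k') = j" using w w0 tail by auto
    then show ?thesis
      using tensor_additive_right[OF r opL_closed[OF b x0] _ _ w(4,5)] w0 tail
        lift_word_Cons_same[OF update_nonempty[OF wordv_nonempty[OF r(1)]]]
      by simp
  qed
qed

lemma lift_word_homogeneous:
  assumes b: "b \<in> opL scB (M i)"
    and w: "wordv M w" "k < length w" "fst (w ! k) = j" "x \<in> carr (M j)"
  shows "lift_word b (w[k := (j, sc (M j) d x)]) - fsc d (lift_word b (w[k := (j, x)])) \<in> NSp M"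
proof -
  obtain j0 x0 r where w0: "w = (j0, x0) # r" using wordv_nonempty[OF w(1)] by (cases w) auto
  let ?c = "fst (b (1, zer (M i)))" and ?e = "snd (b (1, zer (M i)))"
  consider (other) "j0 \<noteq> i" | (head) "j0 = i" "k = 0" | (tail) k' where "j0 = i" "k = Suc k'"
    by (cases k) auto
  then show ?thesis
  proof cases
    case other
    have "fst (hd w) \<noteq> i" using other w0 by simp
    moreover have "lift_word b (w[k := (j, v)]) = tensor_word ?c ?e (w[k := (j, v)])" for v
      using lift_word_other[OF update_nonempty[OF wordv_nonempty[OF w(1)]]] hd_update[OF w(2,3)] other w0
      by simp
    ultimately show ?thesis
      using tensor_homogeneous_right[OF w(1) _ opL_closed[OF b zer_closed] w(2-4)] by simp
  next
    case head
    then have ji: "j = i" using w(3) w0 by simp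
    then have x: "x \<in> carr (M i)" using w by auto
    show ?thesis
    proof (cases "r = []")
      case True
      then show ?thesis
        using NSp_homogeneous_single[OF opL_closed[OF b x, of 0]] w0 head ji
        by (simp add: lift_word_single opL_sc_0[OF b x])
    next
      case False
      have "wordv M r" "fst (hd r) \<noteq> i" using w(1) w0 head False by (auto simp: wordv_Cons)
      then show ?thesis
        using tensor_homogeneous_left[OF _ _ opL_closed[OF b x]] w0 head ji False
        by (simp add: lift_word_Cons_same opL_sc_0[OF b x])
    qed
  next
    case tail
    have r: "wordv M r" "fst (hd r) \<noteq> i" and x0: "x0 \<in> carr (M i)"
      using w w0 tail by (auto simp: wordv_Cons)
    have "k' < length r" "fst (r ! k') = j" using w w0 tail by auto
    then show ?thesis
      using tensor_homogeneous_right[OF r opL_closed[OF b x0] _ _ w(4)] w0 tail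
        lift_word_Cons_same[OF update_nonempty[OF wordv_nonempty[OF r(1)]]]
      by simp
  qed
qed

lemma lift_word_balanced:
  assumes b: "b \<in> opL scB (M i)"
    and w: "wordv M w" "Suc k < length w" "fst (w ! k) = j" "fst (w ! Suc k) = j'"
      "x \<in> carr (M j)" "y \<in> carr (M j')"
  shows "lift_word b (w[k := (j, rac (M j) x e), Suc k := (j', y)])
       - lift_word b (w[k := (j, x), Suc k := (j', lac (M j') e y)]) \<in> NSp M"
proof -
  obtain j0 x0 r where w0: "w = (j0, x0) # r" using wordv_nonempty[OF w(1)] by (cases w) auto
  let ?c = "fst (b (1, zer (M i)))" and ?e = "snd (b (1, zer (M i)))"
  consider (other) "j0 \<noteq> i" | (head) "j0 = i" "k = 0" | (tail) k' where "j0 = i" "k = Suc k'"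
    by (cases k) auto
  then show ?thesis
  proof cases
    case other
    have "fst (hd w) \<noteq> i" using other w0 by simp
    moreover have "fst (hd (w[k := (j, v), Suc k := (j', v')])) \<noteq> i" for v v'
      using hd_update[of k w j v] w(2,3) other w0 by (cases k) auto
    then have "lift_word b (w[k := (j, v), Suc k := (j', v')])
        = tensor_word ?c ?e (w[k := (j, v), Suc k := (j', v')])" for v v'
      using lift_word_other[OF update_nonempty[OF update_nonempty[OF wordv_nonempty[OF w(1)]]]] by simp
    ultimately show ?thesis
      using tensor_balanced_right[OF w(1) _ opL_closed[OF b zer_closed] w(2-6)] by simp
  next
    case head
    obtain y0 r' where r: "r = (j', y0) # r'" using w(2,4) w0 head by (cases r) auto
    have "j = i" "wordv M ((j', y) # r')" "j' \<noteq> i"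
      using w w0 head r by (auto simp: wordv_Cons)
    moreover have x: "x \<in> carr (M i)" using w(5) \<open>j = i\<close> by simp
    ultimately show ?thesis
      using tensor_balanced[of "(j', y) # r'", OF _ _ opL_closed[OF b x]] w0 head r
      by (simp add: lift_word_Cons_same opL_rac[OF b x])
  next
    case tail
    have r: "wordv M r" "fst (hd r) \<noteq> i" and x0: "x0 \<in> carr (M i)"
      using w w0 tail by (auto simp: wordv_Cons)
    have "Suc k' < length r" "fst (r ! k') = j" "fst (r ! Suc k') = j'" using w w0 tail by auto
    then show ?thesis
      using tensor_balanced_right[OF r opL_closed[OF b x0] _ _ _ w(5,6)] w0 tail
        lift_word_Cons_same[OF update_nonempty[OF update_nonempty[OF wordv_nonempty[OF r(1)]]]]
      by simp
  qed
qed

lemma finite_fsupp_lift_word: "finite (fsupp (lift_word a w))"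
  unfolding lift_word_def lamw_def
  by (auto simp: split_def Let_def fadd_eq_plus intro!: finite_fsupp_plus finite_fsupp_delta)

lemma finite_fsupp_lift_vec: "finite (fsupp f) \<Longrightarrow> finite (fsupp (lift_vec a f))"
  unfolding lift_vec_def using finite_fsupp_lext finite_fsupp_lift_word by blast

lemma lift_vec_plus:
  "finite (fsupp f) \<Longrightarrow> finite (fsupp g) \<Longrightarrow> lift_vec a (f + g) = lift_vec a f + lift_vec a g"
  unfolding lift_vec_def by (rule lext_plus)

lemma lift_vec_diff:
  "finite (fsupp f) \<Longrightarrow> finite (fsupp g) \<Longrightarrow> lift_vec a (f - g) = lift_vec a f - lift_vec a g"
  unfolding lift_vec_def by (rule lext_diff)

lemma lift_vec_fsc: "finite (fsupp f) \<Longrightarrow> lift_vec a (fsc c f) = fsc c (lift_vec a f)"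
  unfolding lift_vec_def by (rule lext_fsc)

lemma lift_vec_delta: "lift_vec a (delta w) = lift_word a w"
  unfolding lift_vec_def by (rule lext_delta)

lemma lift_vec_NSp:
  assumes b: "b \<in> opL scB (M i)" and n: "n \<in> NSp M"
  shows "lift_vec b n \<in> NSp M"
proof (rule linear_image_NSp[where s = fsc, OF _ _ _ _ _ _ n])
  fix g assume "g \<in> Rel M"
  then show "lift_vec b g \<in> NSp M"
  proof (cases rule: Rel_cases)
    case (additive w k j x y)
    then show ?thesis using lift_word_additive[OF b additive(1-5)]
      by (simp add: lift_vec_diff lift_vec_delta finite_fsupp_diff finite_fsupp_delta)
  next
    case (homogeneous w k j x c)
    then show ?thesis using lift_word_homogeneous[OF b homogeneous(1-4)]
      by (simp add: lift_vec_diff lift_vec_fsc lift_vec_delta finite_fsupp_fsc finite_fsupp_delta)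
  next
    case (balanced w k j j' x y e)
    then show ?thesis using lift_word_balanced[OF b balanced(1-6)]
      by (simp add: lift_vec_diff lift_vec_delta finite_fsupp_delta)
  qed
qed (simp_all only: lift_vec_plus lift_vec_fsc zero_in_NSp NSp_plus NSp_sc)

lemma lift_scalar_eq_sum:
  "finite S \<Longrightarrow> fsupp f \<subseteq> S \<Longrightarrow> lift_scalar a f = (\<Sum>w\<in>S. scB (f w) (fst (lamw M i a w)))"
  unfolding lift_scalar_def by (rule sum.mono_neutral_left) (auto simp: fsupp_def scB_zero_left)

lemma lift_scalar_plus:
  assumes "finite (fsupp f)" "finite (fsupp g)"
  shows "lift_scalar a (f + g) = lift_scalar a f + lift_scalar a g"
proof -
  let ?S = "fsupp f \<union> fsupp g"
  have "lift_scalar a (f + g) = (\<Sum>w\<in>?S. scB ((f + g) w) (fst (lamw M i a w)))"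
    "lift_scalar a f = (\<Sum>w\<in>?S. scB (f w) (fst (lamw M i a w)))"
    "lift_scalar a g = (\<Sum>w\<in>?S. scB (g w) (fst (lamw M i a w)))"
    by (rule lift_scalar_eq_sum; use assms in \<open>auto simp: fsupp_def\<close>)+
  then show ?thesis by (simp add: scB_add_left sum.distrib)
qed

lemma lift_scalar_diff:
  assumes "finite (fsupp f)" "finite (fsupp g)"
  shows "lift_scalar a (f - g) = lift_scalar a f - lift_scalar a g"
proof -
  let ?S = "fsupp f \<union> fsupp g"
  have "lift_scalar a (f - g) = (\<Sum>w\<in>?S. scB ((f - g) w) (fst (lamw M i a w)))"
    "lift_scalar a f = (\<Sum>w\<in>?S. scB (f w) (fst (lamw M i a w)))"
    "lift_scalar a g = (\<Sum>w\<in>?S. scB (g w) (fst (lamw M i a w)))"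
    by (rule lift_scalar_eq_sum; use assms in \<open>auto simp: fsupp_def\<close>)+
  then show ?thesis by (simp add: scB_diff_left sum_subtractf)
qed

lemma lift_scalar_fsc:
  assumes "finite (fsupp f)"
  shows "lift_scalar a (fsc c f) = scB c (lift_scalar a f)"
proof -
  have "lift_scalar a (fsc c f) = (\<Sum>w\<in>fsupp f. scB (fsc c f w) (fst (lamw M i a w)))"
    "lift_scalar a f = (\<Sum>w\<in>fsupp f. scB (f w) (fst (lamw M i a w)))"
    by (rule lift_scalar_eq_sum; use assms in \<open>auto simp: fsupp_def fsc_def\<close>)+
  then show ?thesis by (simp add: scB_sum[OF assms] fsc_def scB_mult)
qed

lemma lift_scalar_delta: "lift_scalar a (delta w) = fst (lamw M i a w)"
proof -
  have "lift_scalar a (delta w) = (\<Sum>u\<in>{w}. scB (delta w u) (fst (lamw M i a u)))"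
    by (rule lift_scalar_eq_sum) (auto simp: fsupp_def delta_def)
  then show ?thesis by (simp add: delta_def scB_one)
qed

lemma fst_lamw_update:
  assumes "wordv M w" "k < length w" "fst (w ! k) = j"
  shows "fst (lamw M i a (w[k := (j, v)])) = (if single_letter i w then fst (a (0, v)) else 0)"
proof -
  have "w[k := (j, v)] \<noteq> []" using wordv_nonempty[OF assms(1)] by (rule update_nonempty)
  moreover have "single_letter i w \<Longrightarrow> w[k := (j, v)] = [(j, v)]"
    using assms(2) by (cases w) (auto simp: single_letter_def)
  ultimately show ?thesis by (simp add: fst_lamw single_letter_update[OF assms(2,3)])
qed

text \<open>The scalar part only sees single letters of index \<open>i\<close>, on which \<open>b\<close> is additive and
  homogeneous; balancing relations involve words of length at least two.\<close>

lemma lift_scalar_NSp: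
  assumes b: "b \<in> opL scB (M i)" and n: "n \<in> NSp M"
  shows "lift_scalar b n = 0"
proof -
  have "lift_scalar b n \<in> {0}"
  proof (rule linear_image_NSp[where s = scB, OF _ _ _ _ _ _ n])
    fix g assume "g \<in> Rel M"
    then show "lift_scalar b g \<in> {0}"
    proof (cases rule: Rel_cases)
      case (additive w k j x y)
      moreover have "single_letter i w \<Longrightarrow> j = i"
        using additive(2,3) by (cases w) (auto simp: single_letter_def)
      ultimately show ?thesis
        by (auto simp: lift_scalar_diff lift_scalar_delta finite_fsupp_diff finite_fsupp_delta
            fst_lamw_update opL_ad[OF b])
    next
      case (homogeneous w k j x c)
      moreover have "single_letter i w \<Longrightarrow> j = i"
        using homogeneous(2,3) by (cases w) (auto simp: single_letter_def)
      ultimately show ?thesis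
        by (auto simp: lift_scalar_diff lift_scalar_fsc lift_scalar_delta finite_fsupp_fsc
            finite_fsupp_delta fst_lamw_update opL_sc_0[OF b] scB_zero)
    next
      case (balanced w k j j' x y e)
      then have "Suc 0 < length u \<Longrightarrow> fst (lamw M i b u) = 0" for u
        by (cases u) (auto simp: fst_lamw single_letter_def)
      with balanced show ?thesis
        by (simp add: lift_scalar_diff lift_scalar_delta finite_fsupp_delta)
    qed
  qed (simp_all only: lift_scalar_plus lift_scalar_fsc scB_zero singleton_iff add_0)
  then show ?thesis by simp
qed

lemma wordv_lift_word:
  assumes b: "b \<in> opL scB (M i)" and w: "wordv M w" and v: "v \<in> fsupp (lift_word b w)"
  shows "wordv M v"
proof -
  obtain j0 x0 r where w0: "w = (j0, x0) # r" using wordv_nonempty[OF w] by (cases w) auto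
  have x0: "x0 \<in> carr (M j0)" using w w0 by (simp add: wordv_Cons)
  consider (other) "j0 \<noteq> i" | (single) "j0 = i" "r = []" | (long) "j0 = i" "r \<noteq> []"
    by blast
  then show ?thesis
  proof cases
    case other
    let ?c = "fst (b (1, zer (M i)))" and ?e = "snd (b (1, zer (M i)))"
    have "v = wl M ?c w \<or> v = (i, ?e) # w"
      using v fsupp_delta_plus lift_word_other[of w b] other w0 by (auto simp: tensor_word_def)
    then show ?thesis using wordv_wl[OF w] w w0 other opL_closed[OF b zer_closed] by (auto simp: wordv_Cons)
  next
    case single
    then have "v = [(i, snd (b (0, x0)))]" using v fsupp_delta w0 by (auto simp: lift_word_single)
    then show ?thesis using opL_closed[OF b] x0 single by (simp add: wordv_single)
  next
    case long
    have r: "wordv M r" "fst (hd r) \<noteq> i" using w w0 long by (auto simp: wordv_Cons)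
    have "v = wl M (fst (b (0, x0))) r \<or> v = (i, snd (b (0, x0))) # r"
      using v fsupp_delta_plus w0 long by (auto simp: lift_word_Cons_same tensor_word_def)
    then show ?thesis
      using wordv_wl[OF r(1)] r opL_closed[OF b] x0 long wordv_nonempty[OF r(1)] by (auto simp: wordv_Cons)
  qed
qed

lemma FV_lift_vec:
  assumes b: "b \<in> opL scB (M i)" and f: "f \<in> FV M"
  shows "lift_vec b f \<in> FV M"
  using f finite_fsupp_lift_vec fsupp_lext wordv_lift_word[OF b]
  unfolding FV_iff lift_vec_def by metis

lemma restrict_letters_lift_word:
  assumes b: "b \<in> opL scB (M i)" and w: "wordv M w"
  shows "restrict_letters i (lift_word b w) = (if single_letter i w then lift_word b w else 0)"
proof -
  obtain j0 x0 r where w0: "w = (j0, x0) # r" using wordv_nonempty[OF w] by (cases w) auto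
  consider (other) "j0 \<noteq> i" | (single) "j0 = i" "r = []" | (long) "j0 = i" "r \<noteq> []"
    by blast
  then show ?thesis
  proof cases
    case other
    then show ?thesis
      using w0 by (simp add: lift_word_other tensor_word_def restrict_letters_plus restrict_letters_delta
          single_letter_def)
  next
    case single
    then show ?thesis
      using w0 by (simp add: lift_word_single restrict_letters_delta single_letter_def)
  next
    case long
    have "fst (hd r) \<noteq> i" using w w0 long by (simp add: wordv_Cons)
    then have "\<not> single_letter i (wl M c r)" "\<not> single_letter i ((i, e) # r)" "\<not> single_letter i w"
      for c e using long w0 by (auto simp: single_letter_def hd_wl[OF long(2)])
    then show ?thesis
      using w0 long
      by (simp add: lift_word_Cons_same tensor_word_def restrict_letters_plus restrict_letters_delta)
  qed
qed

lemma restrict_letters_lift_vec: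
  assumes b: "b \<in> opL scB (M i)" and f: "f \<in> FV M"
  shows "restrict_letters i (lift_vec b f) = lift_vec b (restrict_letters i f)"
proof
  fix v
  let ?S = "fsupp f"
  have fin: "finite ?S" using f by (simp add: FV_iff)
  have "restrict_letters i (lift_vec b f) v = (\<Sum>w\<in>?S. f w * restrict_letters i (lift_word b w) v)"
    unfolding lift_vec_def lext_eq_sum[OF fin order_refl] by (simp add: restrict_letters_def)
  also have "\<dots> = (\<Sum>w\<in>?S. restrict_letters i f w * lift_word b w v)"
    using f restrict_letters_lift_word[OF b] by (intro sum.cong) (auto simp: FV_iff restrict_letters_def)
  also have "\<dots> = lift_vec b (restrict_letters i f) v"
    unfolding lift_vec_def by (subst lext_eq_sum[OF fin]) (auto simp: fsupp_def restrict_letters_def)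
  finally show "restrict_letters i (lift_vec b f) v = lift_vec b (restrict_letters i f) v" .
qed

lemma lift_scalar_restrict_letters:
  assumes f: "f \<in> FV M"
  shows "lift_scalar a (restrict_letters i f) = lift_scalar a f"
proof -
  have fin: "finite (fsupp f)" using f by (simp add: FV_iff)
  have "scB (restrict_letters i f w) (fst (lamw M i a w)) = scB (f w) (fst (lamw M i a w))"
    if "w \<in> fsupp f" for w
  proof (cases "single_letter i w")
    case False
    have "w \<noteq> []" using that f by (auto simp: FV_iff dest: wordv_nonempty)
    then show ?thesis using False fst_lamw[of w M i a] by (simp add: restrict_letters_def scB_zero)
  qed (simp add: restrict_letters_def)
  then have "(\<Sum>w\<in>fsupp f. scB (restrict_letters i f w) (fst (lamw M i a w)))
      = (\<Sum>w\<in>fsupp f. scB (f w) (fst (lamw M i a w)))"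
    by (rule sum.cong[OF refl])
  moreover have "lift_scalar a (restrict_letters i f)
      = (\<Sum>w\<in>fsupp f. scB (restrict_letters i f w) (fst (lamw M i a w)))"
    by (rule lift_scalar_eq_sum[OF fin]) (auto simp: fsupp_def restrict_letters_def)
  ultimately show ?thesis by (simp add: lift_scalar_def)
qed

definition lift :: "('b \<times> 'm \<Rightarrow> 'b \<times> 'm) \<Rightarrow> 'b \<times> ('i, 'm) fvec \<Rightarrow> 'b \<times> ('i, 'm) fvec" where
  "lift a p = (fst (a (fst p, zer (M i))) + lift_scalar a (snd p),
    delta [(i, snd (a (fst p, zer (M i))))] + lift_vec a (snd p))"

definition rel_eq :: "'b \<times> ('i, 'm) fvec \<Rightarrow> 'b \<times> ('i, 'm) fvec \<Rightarrow> bool" where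
  "rel_eq p q \<longleftrightarrow> fst p = fst q \<and> snd p - snd q \<in> NSp M"

definition pair_add :: "'b \<times> ('i, 'm) fvec \<Rightarrow> 'b \<times> ('i, 'm) fvec \<Rightarrow> 'b \<times> ('i, 'm) fvec" where
  "pair_add p q = (fst p + fst q, snd p + snd q)"

definition pair_scale :: "complex \<Rightarrow> 'b \<times> ('i, 'm) fvec \<Rightarrow> 'b \<times> ('i, 'm) fvec" where
  "pair_scale c p = (scB c (fst p), fsc c (snd p))"

lemma rel_eq_refl: "rel_eq p p"
  by (simp add: rel_eq_def zero_in_NSp)

lemma rel_eq_sym: "rel_eq p q \<Longrightarrow> rel_eq q p"
  unfolding rel_eq_def using NSp_uminus[of "snd p - snd q" M] by simp

lemma rel_eq_trans: "rel_eq p q \<Longrightarrow> rel_eq q r \<Longrightarrow> rel_eq p r"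
  unfolding rel_eq_def using NSp_plus[of "snd p - snd q" M "snd q - snd r"] by simp

lemma rel_eq_pair_add: "rel_eq p p' \<Longrightarrow> rel_eq q q' \<Longrightarrow> rel_eq (pair_add p q) (pair_add p' q')"
  unfolding rel_eq_def pair_add_def using NSp_plus[of "snd p - snd p'" M "snd q - snd q'"]
  by (simp add: algebra_simps)

lemma rel_eq_pair_scale: "rel_eq p p' \<Longrightarrow> rel_eq (pair_scale c p) (pair_scale c p')"
  unfolding rel_eq_def pair_scale_def using NSp_sc[of "snd p - snd p'" M c] by (simp add: fsc_diff)

lemma FV_lift: "a \<in> opL scB (M i) \<Longrightarrow> snd p \<in> FV M \<Longrightarrow> snd (lift a p) \<in> FV M"
  unfolding lift_def by (simp add: FV_plus FV_delta wordv_single opL_closed zer_closed FV_lift_vec)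

lemma lift_rel_eq:
  assumes a: "a \<in> opL scB (M i)" and p: "snd p \<in> FV M" "snd q \<in> FV M" and pq: "rel_eq p q"
  shows "rel_eq (lift a p) (lift a q)"
proof -
  have fin: "finite (fsupp (snd p))" "finite (fsupp (snd q))" using p by (auto simp: FV_iff)
  have n: "snd p - snd q \<in> NSp M" "fst p = fst q" using pq by (auto simp: rel_eq_def)
  have "lift_scalar a (snd p) = lift_scalar a (snd q)"
    using lift_scalar_diff[OF fin, of a] lift_scalar_NSp[OF a n(1)] by simp
  moreover have "lift_vec a (snd p) - lift_vec a (snd q) \<in> NSp M"
    using lift_vec_diff[OF fin, of a] lift_vec_NSp[OF a n(1)] by simp
  ultimately show ?thesis using n(2) unfolding lift_def rel_eq_def by (simp add: algebra_simps)
qed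

lemma lift_pair_add:
  assumes a: "a \<in> opL scB (M i)" and p: "snd p \<in> FV M" "snd q \<in> FV M"
  shows "rel_eq (lift a (pair_add p q)) (pair_add (lift a p) (lift a q))"
proof -
  have fin: "finite (fsupp (snd p))" "finite (fsupp (snd q))" using p by (auto simp: FV_iff)
  let ?z = "zer (M i)"
  have add: "a (fst p + fst q, ?z) = (fst (a (fst p, ?z)) + fst (a (fst q, ?z)),
      ad (M i) (snd (a (fst p, ?z))) (snd (a (fst q, ?z))))"
    using opL_add[OF a zer_closed zer_closed, of "fst p" "fst q"] by (simp add: ad_zer_zer)
  have "delta [(i, ad (M i) (snd (a (fst p, ?z))) (snd (a (fst q, ?z))))]
      - delta [(i, snd (a (fst p, ?z)))] - delta [(i, snd (a (fst q, ?z)))] \<in> NSp M"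
    by (rule NSp_additive_single) (simp_all add: opL_closed[OF a] zer_closed)
  then show ?thesis
    unfolding lift_def pair_add_def rel_eq_def
    by (simp add: add lift_scalar_plus[OF fin] lift_vec_plus[OF fin] algebra_simps)
qed

lemma lift_pair_scale:
  assumes a: "a \<in> opL scB (M i)" and p: "snd p \<in> FV M"
  shows "rel_eq (lift a (pair_scale c p)) (pair_scale c (lift a p))"
proof -
  have fin: "finite (fsupp (snd p))" using p by (auto simp: FV_iff)
  let ?z = "zer (M i)"
  have scale: "a (scB c (fst p), ?z) = (scB c (fst (a (fst p, ?z))), sc (M i) c (snd (a (fst p, ?z))))"
    using opL_sc[OF a zer_closed, of c "fst p"] by (simp add: sc_zer)
  have "delta [(i, sc (M i) c (snd (a (fst p, ?z))))] - fsc c (delta [(i, snd (a (fst p, ?z)))]) \<in> NSp M"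
    by (rule NSp_homogeneous_single) (simp add: opL_closed[OF a] zer_closed)
  then show ?thesis
    unfolding lift_def pair_scale_def rel_eq_def
    by (simp add: scale lift_scalar_fsc[OF fin] lift_vec_fsc[OF fin] fsc_plus scB_add algebra_simps)
qed

lemma lift_single:
  assumes a: "a \<in> opL scB (M i)" and x: "x \<in> carr (M i)"
  shows "rel_eq (lift a (b0, delta [(i, x)])) (fst (a (b0, x)), delta [(i, snd (a (b0, x)))])"
proof -
  let ?z = "zer (M i)"
  have split: "a (b0, x) = (fst (a (b0, ?z)) + fst (a (0, x)), ad (M i) (snd (a (b0, ?z))) (snd (a (0, x))))"
    using opL_add[OF a zer_closed x, of b0 0] by (simp add: ad_zer x)
  have "delta [(i, ad (M i) (snd (a (b0, ?z))) (snd (a (0, x))))]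
      - delta [(i, snd (a (b0, ?z)))] - delta [(i, snd (a (0, x)))] \<in> NSp M"
    by (rule NSp_additive_single) (simp_all add: opL_closed[OF a] zer_closed x)
  then have "delta [(i, snd (a (b0, ?z)))] + delta [(i, snd (a (0, x)))]
      - delta [(i, ad (M i) (snd (a (b0, ?z))) (snd (a (0, x))))] \<in> NSp M"
    by (auto dest: NSp_uminus simp: algebra_simps)
  then show ?thesis unfolding lift_def rel_eq_def
    by (simp add: split lift_scalar_delta lift_vec_delta lamw_single lift_word_single)
qed

definition rel_linear :: "('b \<times> ('i, 'm) fvec \<Rightarrow> 'b \<times> ('i, 'm) fvec) \<Rightarrow> bool" where
  "rel_linear \<Psi> \<longleftrightarrow> (\<forall>p. snd p \<in> FV M \<longrightarrow> snd (\<Psi> p) \<in> FV M) \<and>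
     (\<forall>p q. snd p \<in> FV M \<longrightarrow> snd q \<in> FV M \<longrightarrow> rel_eq p q \<longrightarrow> rel_eq (\<Psi> p) (\<Psi> q)) \<and>
     (\<forall>p q. snd p \<in> FV M \<longrightarrow> snd q \<in> FV M \<longrightarrow> rel_eq (\<Psi> (pair_add p q)) (pair_add (\<Psi> p) (\<Psi> q))) \<and>
     (\<forall>c p. snd p \<in> FV M \<longrightarrow> rel_eq (\<Psi> (pair_scale c p)) (pair_scale c (\<Psi> p)))"

lemma rel_linear_lift: "a \<in> opL scB (M i) \<Longrightarrow> rel_linear (lift a)"
  unfolding rel_linear_def using FV_lift lift_rel_eq lift_pair_add lift_pair_scale by blast

lemma rel_linearD:
  fixes p q :: "'b \<times> ('i, 'm) fvec"
  assumes "rel_linear \<Psi>"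
  shows "snd p \<in> FV M \<Longrightarrow> snd (\<Psi> p) \<in> FV M"
    and "snd p \<in> FV M \<Longrightarrow> snd q \<in> FV M \<Longrightarrow> rel_eq p q \<Longrightarrow> rel_eq (\<Psi> p) (\<Psi> q)"
    and "snd p \<in> FV M \<Longrightarrow> snd q \<in> FV M \<Longrightarrow> rel_eq (\<Psi> (pair_add p q)) (pair_add (\<Psi> p) (\<Psi> q))"
    and "snd p \<in> FV M \<Longrightarrow> rel_eq (\<Psi> (pair_scale c p)) (pair_scale c (\<Psi> p))"
  using assms unfolding rel_linear_def by blast+

lemma rel_linear_comp:
  assumes \<Psi>1: "rel_linear \<Psi>1" and \<Psi>2: "rel_linear \<Psi>2"
  shows "rel_linear (\<Psi>1 \<circ> \<Psi>2)"
  unfolding rel_linear_def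
proof (intro conjI allI impI)
  fix p q :: "'b \<times> ('i, 'm) fvec" assume p: "snd p \<in> FV M" and q: "snd q \<in> FV M"
  have FV: "snd (\<Psi>2 (pair_add p q)) \<in> FV M" "snd (\<Psi>2 p) \<in> FV M" "snd (\<Psi>2 q) \<in> FV M"
    "snd (pair_add (\<Psi>2 p) (\<Psi>2 q)) \<in> FV M"
    using rel_linearD(1)[OF \<Psi>2] p q by (simp_all add: pair_add_def FV_plus)
  show "rel_eq ((\<Psi>1 \<circ> \<Psi>2) (pair_add p q)) (pair_add ((\<Psi>1 \<circ> \<Psi>2) p) ((\<Psi>1 \<circ> \<Psi>2) q))"
    using rel_eq_trans[OF rel_linearD(2)[OF \<Psi>1 FV(1) FV(4) rel_linearD(3)[OF \<Psi>2 p q]]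
        rel_linearD(3)[OF \<Psi>1 FV(2,3)]] by simp
  show "rel_eq p q \<Longrightarrow> rel_eq ((\<Psi>1 \<circ> \<Psi>2) p) ((\<Psi>1 \<circ> \<Psi>2) q)"
    using rel_linearD(2)[OF \<Psi>1 FV(2,3) rel_linearD(2)[OF \<Psi>2 p q]] by simp
next
  fix c and p :: "'b \<times> ('i, 'm) fvec" assume p: "snd p \<in> FV M"
  have FV: "snd (\<Psi>2 (pair_scale c p)) \<in> FV M" "snd (\<Psi>2 p) \<in> FV M"
    "snd (pair_scale c (\<Psi>2 p)) \<in> FV M"
    using rel_linearD(1)[OF \<Psi>2] p by (simp_all add: pair_scale_def FV_fsc)
  show "rel_eq ((\<Psi>1 \<circ> \<Psi>2) (pair_scale c p)) (pair_scale c ((\<Psi>1 \<circ> \<Psi>2) p))"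
    using rel_eq_trans[OF rel_linearD(2)[OF \<Psi>1 FV(1) FV(3) rel_linearD(4)[OF \<Psi>2 p]]
        rel_linearD(4)[OF \<Psi>1 FV(2)]] by simp
qed (use rel_linearD(1)[OF \<Psi>1] rel_linearD(1)[OF \<Psi>2] in simp)

lemma rel_linear_add_scale:
  assumes \<Psi>: "rel_linear \<Psi>" and p: "snd p \<in> FV M" and q: "snd q \<in> FV M"
  shows "rel_eq (\<Psi> (pair_add p (pair_scale c q))) (pair_add (\<Psi> p) (pair_scale c (\<Psi> q)))"
proof -
  have "snd (pair_scale c q) \<in> FV M" using q by (simp add: pair_scale_def FV_fsc)
  then show ?thesis
    using rel_eq_trans[OF rel_linearD(3)[OF \<Psi> p] rel_eq_pair_add[OF rel_eq_refl rel_linearD(4)[OF \<Psi> q]]]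
    by simp
qed

text \<open>The zero vector is related to \<open>delta [(i, zer (M i))]\<close>, a single letter.\<close>

lemma rel_linear_agree_zero:
  assumes \<Psi>1: "rel_linear \<Psi>1" and \<Psi>2: "rel_linear \<Psi>2"
    and agree: "\<And>b0 x. x \<in> carr (M i) \<Longrightarrow> rel_eq (\<Psi>1 (b0, delta [(i, x)])) (\<Psi>2 (b0, delta [(i, x)]))"
  shows "rel_eq (\<Psi>1 (b0, 0)) (\<Psi>2 (b0, 0))"
proof -
  have "delta [(i, zer (M i))] \<in> NSp M"
    using NSp_uminus[OF NSp_additive_single[OF zer_closed zer_closed]] by (simp add: ad_zer_zer)
  then have zero: "rel_eq (b0, 0) (b0, delta [(i, zer (M i))])"
    using NSp_uminus by (fastforce simp: rel_eq_def)
  have FV: "snd (b0, 0 :: ('i, 'm) fvec) \<in> FV M" "snd (b0, delta [(i, zer (M i))]) \<in> FV M"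
    by (simp_all add: FV_zero FV_delta wordv_single zer_closed)
  show ?thesis
    using rel_eq_trans[OF rel_eq_trans[OF rel_linearD(2)[OF \<Psi>1 FV zero] agree[OF zer_closed]]
        rel_linearD(2)[OF \<Psi>2 FV(2,1) rel_eq_sym[OF zero]]] .
qed

text \<open>A vector supported on single letters of index \<open>i\<close> is a finite combination of
  vectors \<open>delta [(i, x)]\<close>.\<close>

lemma rel_linear_agree_on_letters:
  assumes \<Psi>1: "rel_linear \<Psi>1" and \<Psi>2: "rel_linear \<Psi>2"
    and agree: "\<And>b0 x. x \<in> carr (M i) \<Longrightarrow> rel_eq (\<Psi>1 (b0, delta [(i, x)])) (\<Psi>2 (b0, delta [(i, x)]))"
    and g: "g \<in> FV M" "\<forall>w\<in>fsupp g. single_letter i w"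
  shows "rel_eq (\<Psi>1 (b0, g)) (\<Psi>2 (b0, g))"
proof -
  have "rel_eq (\<Psi>1 (b0, g)) (\<Psi>2 (b0, g))"
    if "finite S" "g \<in> FV M" "fsupp g \<subseteq> S" "\<forall>w\<in>fsupp g. single_letter i w" for S g b0
    using that
  proof (induction S arbitrary: g b0 rule: finite_induct)
    case empty
    then have "g = 0" by (auto simp: fsupp_def fun_eq_iff)
    then show ?case using rel_linear_agree_zero[OF \<Psi>1 \<Psi>2 agree, of b0] by (simp only:)
  next
    case (insert w S)
    let ?g' = "g(w := 0)"
    have g': "?g' \<in> FV M" "fsupp ?g' \<subseteq> S" "\<forall>w\<in>fsupp ?g'. single_letter i w"
      using insert.prems by (auto simp: FV_iff fsupp_def intro: finite_subset[of _ "{w. g w \<noteq> 0}"])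
    show ?case
    proof (cases "g w = 0")
      case True
      then show ?thesis using insert.IH[OF g'] by (metis fun_upd_triv)
    next
      case False
      then have "single_letter i w" "wordv M w" using insert.prems by (auto simp: FV_iff fsupp_def)
      then obtain x where w: "w = [(i, x)]" and x: "x \<in> carr (M i)"
        by (cases w) (auto simp: single_letter_def wordv_Cons)
      let ?q = "(0 :: 'b, delta [(i, x)])"
      have split: "(b0, g) = pair_add (b0, ?g') (pair_scale (g w) ?q)"
        unfolding pair_add_def pair_scale_def using w by (simp add: scB_zero fsc_def delta_def fun_eq_iff)
      have FV: "snd (b0, ?g') \<in> FV M" "snd ?q \<in> FV M" using g'(1) x by (simp_all add: FV_delta wordv_single)
      have "rel_eq (pair_add (\<Psi>1 (b0, ?g')) (pair_scale (g w) (\<Psi>1 ?q)))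
          (pair_add (\<Psi>2 (b0, ?g')) (pair_scale (g w) (\<Psi>2 ?q)))"
        by (rule rel_eq_pair_add[OF insert.IH[OF g'] rel_eq_pair_scale[OF agree[OF x]]])
      then show ?thesis
        unfolding split using rel_linear_add_scale[OF \<Psi>1 FV] rel_eq_sym[OF rel_linear_add_scale[OF \<Psi>2 FV]]
        by (blast intro: rel_eq_trans)
    qed
  qed
  then show ?thesis using g by (auto simp: FV_iff)
qed

lemma lift_compose:
  assumes a: "a \<in> opL scB (M i)" and b: "b \<in> opL scB (M i)"
    and g: "g \<in> FV M" "\<forall>w\<in>fsupp g. single_letter i w"
  shows "rel_eq (lift a (lift b (b0, g))) (lift (compose (pcar (M i)) a b) (b0, g))"
proof -
  let ?c = "compose (pcar (M i)) a b"
  have "rel_eq ((lift a \<circ> lift b) (b0', delta [(i, x)])) (lift ?c (b0', delta [(i, x)]))"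
    if x: "x \<in> carr (M i)" for b0' x
  proof -
    let ?p = "b (b0', x)"
    have bx: "snd ?p \<in> carr (M i)" using opL_closed[OF b x] .
    have lift_b: "rel_eq (lift a (lift b (b0', delta [(i, x)]))) (lift a (fst ?p, delta [(i, snd ?p)]))"
      using lift_rel_eq[OF a FV_lift[OF b] _ lift_single[OF b x]] x bx by (simp add: FV_delta wordv_single)
    have lift_a: "rel_eq (lift a (fst ?p, delta [(i, snd ?p)])) (fst (a ?p), delta [(i, snd (a ?p))])"
      using lift_single[OF a bx, of "fst ?p"] by simp
    have "?c (b0', x) = a ?p" using x by (simp add: compose_eq pcar_def)
    then have lift_c: "rel_eq (lift ?c (b0', delta [(i, x)])) (fst (a ?p), delta [(i, snd (a ?p))])"
      using lift_single[OF opL_compose[OF a b] x, of b0'] by simp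
    show ?thesis using rel_eq_trans[OF rel_eq_trans[OF lift_b lift_a] rel_eq_sym[OF lift_c]] by simp
  qed
  then show ?thesis
    using rel_linear_agree_on_letters[OF rel_linear_comp[OF rel_linear_lift[OF a] rel_linear_lift[OF b]]
        rel_linear_lift[OF opL_compose[OF a b]] _ g] by simp
qed

end

subsection \<open>The reduced free product as a quotient\<close>

lemma cls_iff: "g \<in> cls M f \<longleftrightarrow> g \<in> FV M \<and> g - f \<in> NSp M"
  unfolding cls_def by (simp add: fadd_eq_plus fsc_minus_one)

lemma rep_cls:
  assumes "f \<in> FV M"
  shows "rep (cls M f) \<in> FV M" "rep (cls M f) - f \<in> NSp M"
proof -
  have "f \<in> cls M f" using assms zero_in_NSp by (simp add: cls_iff)
  then have "rep (cls M f) \<in> cls M f" unfolding rep_def by (rule someI[where x = f])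
  then show "rep (cls M f) \<in> FV M" "rep (cls M f) - f \<in> NSp M" by (auto simp: cls_iff)
qed

lemma cls_eq:
  assumes "f \<in> FV M" "g \<in> FV M" "f - g \<in> NSp M"
  shows "cls M f = cls M g"
proof -
  have "h - f \<in> NSp M \<longleftrightarrow> h - g \<in> NSp M" for h
    using NSp_plus[OF _ assms(3), of "h - f"] NSp_diff[OF _ assms(3), of "h - g"] by auto
  then show ?thesis by (auto simp: cls_iff)
qed

lemma Xc_cls: "f \<in> FV M \<Longrightarrow> (b, cls M f) \<in> Xc M"
  by (simp add: Xc_def Xo_def)

lemma Xc_cases:
  assumes "x \<in> Xc M"
  obtains b0 f where "x = (b0, cls M f)" "f \<in> FV M"
  using assms by (auto simp: Xc_def Xo_def)

context free_factor
begin

definition to_Xc :: "'b \<times> ('i, 'm) fvec \<Rightarrow> 'b \<times> ('i, 'm) fvec set" where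
  "to_Xc p = (fst p, cls M (snd p))"

lemma to_Xc_eq: "snd p \<in> FV M \<Longrightarrow> snd q \<in> FV M \<Longrightarrow> rel_eq p q \<Longrightarrow> to_Xc p = to_Xc q"
  unfolding to_Xc_def rel_eq_def using cls_eq by (cases p, cases q) auto

text \<open>\<open>lam\<close> is defined through an arbitrary representative of the class; the lift respects the
  relations, so any representative may be used.\<close>

lemma lam_cls:
  assumes a: "a \<in> opL scB (M i)" and f: "f \<in> FV M"
  shows "lam scB M i a (b0, cls M f) = to_Xc (lift a (b0, f))"
proof -
  let ?f' = "rep (cls M f)"
  have "lam scB M i a (b0, cls M f) = to_Xc (lift a (b0, ?f'))"
    unfolding lam_def using Xc_cls[OF f, of b0]
    by (simp add: Let_def split_def lift_def to_Xc_def lift_scalar_def fsupp_def lift_vec_def lext_def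
        lift_word_def fadd_eq_plus)
  also have "\<dots> = to_Xc (lift a (b0, f))"
    using FV_lift[OF a] lift_rel_eq[OF a] rep_cls[OF f] f by (intro to_Xc_eq) (auto simp: rel_eq_def)
  finally show ?thesis .
qed

lemma Pj_cls:
  assumes f: "f \<in> FV M"
  shows "Pj M i (b0, cls M f) = (b0, cls M (restrict_letters i f))"
proof -
  let ?f' = "rep (cls M f)"
  have "Pj M i (b0, cls M f) = (b0, cls M (restrict_letters i ?f'))"
    unfolding Pj_def using Xc_cls[OF f, of b0] by (simp add: restrict_letters_def single_letter_def)
  also have "cls M (restrict_letters i ?f') = cls M (restrict_letters i f)"
    using FV_restrict_letters rep_cls[OF f] f restrict_letters_NSp[OF rep_cls(2)[OF f]]
    by (intro cls_eq) (auto simp: restrict_letters_diff)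
  finally show ?thesis .
qed

lemma lam_closed:
  assumes a: "a \<in> opL scB (M i)" and x: "x \<in> Xc M"
  shows "lam scB M i a x \<in> Xc M"
proof -
  obtain b0 f where x_eq: "x = (b0, cls M f)" and f: "f \<in> FV M" using x by (rule Xc_cases)
  show ?thesis
    using lam_cls[OF a f, of b0] FV_lift[OF a, of "(b0, f)"] f unfolding x_eq to_Xc_def
    by (simp add: Xc_cls)
qed

lemma Pj_closed:
  assumes x: "x \<in> Xc M"
  shows "Pj M i x \<in> Xc M"
proof -
  obtain b0 f where x_eq: "x = (b0, cls M f)" and f: "f \<in> FV M" using x by (rule Xc_cases)
  show ?thesis unfolding x_eq Pj_cls[OF f] by (rule Xc_cls[OF FV_restrict_letters[OF f]])
qed

lemma Pj_idem:
  assumes x: "x \<in> Xc M"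
  shows "Pj M i (Pj M i x) = Pj M i x"
proof -
  obtain b0 f where x_eq: "x = (b0, cls M f)" and f: "f \<in> FV M" using x by (rule Xc_cases)
  show ?thesis
    unfolding x_eq Pj_cls[OF f] Pj_cls[OF FV_restrict_letters[OF f]] restrict_letters_idem ..
qed

lemma Pj_range:
  assumes x: "x \<in> Xc M"
  shows "Pj M i x \<in> Xsub M i"
proof -
  obtain b0 f where x_eq: "x = (b0, cls M f)" and f: "f \<in> FV M" using x by (rule Xc_cases)
  have "\<forall>w. restrict_letters i f w \<noteq> 0 \<longrightarrow> length w = 1 \<and> fst (hd w) = i"
    by (simp add: restrict_letters_def single_letter_def)
  then show ?thesis
    unfolding x_eq Pj_cls[OF f] Xsub_def using FV_restrict_letters[OF f] by blast
qed

text \<open>\<open>\<lambda>\<^sub>i(a)\<close> maps \<open>B \<oplus> X\<ring>\<^sub>i\<close> into itself and preserves the complementary summands.\<close>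

lemma Pj_lam:
  assumes a: "a \<in> opL scB (M i)" and x: "x \<in> Xc M"
  shows "Pj M i (lam scB M i a x) = lam scB M i a (Pj M i x)"
proof -
  obtain b0 f where x_eq: "x = (b0, cls M f)" and f: "f \<in> FV M" using x by (rule Xc_cases)
  let ?e = "snd (a (b0, zer (M i)))"
  have "delta [(i, ?e)] + lift_vec a f \<in> FV M"
    using FV_lift[OF a, of "(b0, f)"] f by (simp add: lift_def)
  then have "Pj M i (lam scB M i a x)
      = (fst (a (b0, zer (M i))) + lift_scalar a f, cls M (restrict_letters i (delta [(i, ?e)] + lift_vec a f)))"
    unfolding x_eq lam_cls[OF a f] by (simp add: to_Xc_def lift_def Pj_cls)
  also have "\<dots> = to_Xc (lift a (b0, restrict_letters i f))"
    by (simp add: restrict_letters_plus restrict_letters_delta restrict_letters_lift_vec[OF a f]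
        lift_scalar_restrict_letters[OF f] single_letter_def to_Xc_def lift_def)
  also have "\<dots> = lam scB M i a (Pj M i x)"
    unfolding x_eq Pj_cls[OF f] lam_cls[OF a FV_restrict_letters[OF f]] ..
  finally show ?thesis .
qed

lemma lam_lam_Pj:
  assumes a: "a \<in> opL scB (M i)" and b: "b \<in> opL scB (M i)" and x: "x \<in> Xc M"
  shows "lam scB M i a (lam scB M i b (Pj M i x)) = lam scB M i (compose (pcar (M i)) a b) (Pj M i x)"
proof -
  obtain b0 f where x_eq: "x = (b0, cls M f)" and f: "f \<in> FV M" using x by (rule Xc_cases)
  let ?c = "compose (pcar (M i)) a b" and ?g = "restrict_letters i f"
  have g: "?g \<in> FV M" "\<forall>w\<in>fsupp ?g. single_letter i w"
    using FV_restrict_letters[OF f] by (auto simp: restrict_letters_def fsupp_def)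
  have FV: "snd (lift b (b0, ?g)) \<in> FV M" using FV_lift[OF b] g by simp
  have "lam scB M i a (lam scB M i b (Pj M i x)) = to_Xc (lift a (lift b (b0, ?g)))"
    using lam_cls[OF a FV] lam_cls[OF b g(1)] unfolding x_eq Pj_cls[OF f] by (simp add: to_Xc_def)
  also have "\<dots> = to_Xc (lift ?c (b0, ?g))"
    using FV_lift[OF a FV] FV_lift[OF opL_compose[OF a b]] lift_compose[OF a b g] g
    by (intro to_Xc_eq) simp_all
  also have "\<dots> = lam scB M i ?c (Pj M i x)"
    unfolding x_eq Pj_cls[OF f] lam_cls[OF opL_compose[OF a b] g(1)] ..
  finally show ?thesis .
qed

lemma AB_eq:
  assumes a: "a \<in> opL scB (M i)"
  shows "compose (Xc M) (Pj M i) (compose (Xc M) (lam scB M i a) (Pj M i))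
    = restrict (\<lambda>x. lam scB M i a (Pj M i x)) (Xc M)"
proof
  fix x
  show "compose (Xc M) (Pj M i) (compose (Xc M) (lam scB M i a) (Pj M i)) x
      = restrict (\<lambda>x. lam scB M i a (Pj M i x)) (Xc M) x"
    using Pj_lam[OF a Pj_closed] Pj_idem Pj_closed lam_closed[OF a] by (simp add: compose_def)
qed

lemma restrict_lam_Pj_AB: "c \<in> opL scB (M i) \<Longrightarrow> restrict (\<lambda>x. lam scB M i c (Pj M i x)) (Xc M) \<in> AB scB M i"
  unfolding AB_def by (auto simp flip: AB_eq)

lemma lam_Pj_range:
  assumes c: "c \<in> opL scB (M i)" and x: "x \<in> Xc M"
  shows "lam scB M i c (Pj M i x) \<in> Xsub M i"
  using Pj_range[OF lam_closed[OF c Pj_closed[OF x]]] Pj_lam[OF c Pj_closed[OF x]] Pj_idem[OF x] by simp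

lemma generator_cases:
  assumes "u \<in> AF scB M i \<union> AB scB M i"
  obtains (free) a where "a \<in> opL scB (M i)" "u = lam scB M i a"
  | (boolean) a where "a \<in> opL scB (M i)" "u \<in> AB scB M i" "\<forall>x\<in>Xc M. u x = lam scB M i a (Pj M i x)"
  using assms AB_eq unfolding AF_def AB_def by auto

lemma generator_closed:
  assumes "u \<in> AF scB M i \<union> AB scB M i" and x: "x \<in> Xc M"
  shows "u x \<in> Xc M"
  using assms(1)
proof (cases rule: generator_cases)
  case (free a)
  then show ?thesis using lam_closed[OF free(1) x] by simp
next
  case (boolean a)
  then show ?thesis using lam_closed[OF boolean(1) Pj_closed[OF x]] x by simp
qed

end

definition apply_list :: "('x \<Rightarrow> 'x) list \<Rightarrow> 'x \<Rightarrow> 'x" where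
  "apply_list as x = foldr (\<lambda>u y. u y) as x"

lemma apply_list_Nil [simp]: "apply_list [] x = x"
  by (simp add: apply_list_def)

lemma apply_list_Cons [simp]: "apply_list (u # as) x = u (apply_list as x)"
  by (simp add: apply_list_def)

lemma oprod_apply: "x \<in> X \<Longrightarrow> oprod X as x = apply_list as x"
  by (induction as) (simp_all add: oprod_def compose_eq)

lemma oprod_extensional: "oprod X as \<in> extensional X"
  by (cases as) (simp_all add: oprod_def)

context free_factor
begin

lemma apply_list_closed:
  "set as \<subseteq> AF scB M i \<union> AB scB M i \<Longrightarrow> x \<in> Xc M \<Longrightarrow> apply_list as x \<in> Xc M"
  by (induction as) (auto intro: generator_closed)

text \<open>\<open>\<lambda>\<^sub>i(b) P\<^sub>i \<lambda>\<^sub>i(d) = \<lambda>\<^sub>i(b) \<lambda>\<^sub>i(d) P\<^sub>i = \<lambda>\<^sub>i(b d) P\<^sub>i\<close>: a \<open>P\<^sub>i\<close> absorbs all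
  free factors to its right.\<close>

lemma lam_Pj_free_product:
  assumes "set us \<subseteq> AF scB M i" "b \<in> opL scB (M i)"
  shows "\<exists>c\<in>opL scB (M i). \<forall>x\<in>Xc M. lam scB M i b (Pj M i (apply_list us x)) = lam scB M i c (Pj M i x)"
  using assms
proof (induction us arbitrary: b)
  case (Cons u us)
  obtain d where d: "d \<in> opL scB (M i)" "u = lam scB M i d" using Cons.prems(1) by (auto simp: AF_def)
  let ?bd = "compose (pcar (M i)) b d"
  obtain c where c: "c \<in> opL scB (M i)"
    "\<forall>x\<in>Xc M. lam scB M i ?bd (Pj M i (apply_list us x)) = lam scB M i c (Pj M i x)"
    using Cons.IH[OF _ opL_compose[OF Cons.prems(2) d(1)]] Cons.prems(1) by auto
  have "lam scB M i b (Pj M i (apply_list (u # us) x)) = lam scB M i c (Pj M i x)" if x: "x \<in> Xc M" for x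
  proof -
    have y: "apply_list us x \<in> Xc M" using apply_list_closed[OF _ x, of us] Cons.prems(1) by auto
    have "lam scB M i b (Pj M i (apply_list (u # us) x)) = lam scB M i b (lam scB M i d (Pj M i (apply_list us x)))"
      using Pj_lam[OF d(1) y] d(2) by simp
    also have "\<dots> = lam scB M i ?bd (Pj M i (apply_list us x))" using lam_lam_Pj[OF Cons.prems(2) d(1) y] .
    also have "\<dots> = lam scB M i c (Pj M i x)" using c(2) x by simp
    finally show ?thesis .
  qed
  then show ?case using c(1) by blast
qed auto

lemma boolean_product_lam_Pj:
  assumes "as \<noteq> []" "set as \<subseteq> AF scB M i \<union> AB scB M i" "\<exists>u\<in>set as. u \<in> AB scB M i"
  shows "\<exists>c\<in>opL scB (M i). \<forall>x\<in>Xc M. apply_list as x = lam scB M i c (Pj M i x)"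
  using assms
proof (induction as)
  case (Cons u rest)
  have u: "u \<in> AF scB M i \<union> AB scB M i" using Cons.prems by simp
  show ?case
  proof (cases "\<exists>u'\<in>set rest. u' \<in> AB scB M i")
    case True
    then obtain c where c: "c \<in> opL scB (M i)" "\<forall>x\<in>Xc M. apply_list rest x = lam scB M i c (Pj M i x)"
      using Cons.IH Cons.prems by fastforce
    from u obtain d where d: "d \<in> opL scB (M i)"
      and u_eq: "\<And>x. x \<in> Xc M \<Longrightarrow> u (lam scB M i c (Pj M i x)) = lam scB M i d (lam scB M i c (Pj M i x))"
    proof (cases rule: generator_cases)
      case (boolean a)
      have "u (lam scB M i c (Pj M i x)) = lam scB M i a (lam scB M i c (Pj M i x))" if x: "x \<in> Xc M" for x
        using boolean(3) lam_closed[OF c(1) Pj_closed[OF x]] Pj_lam[OF c(1) Pj_closed[OF x]] Pj_idem[OF x]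
        by simp
      then show ?thesis using that boolean(1) by blast
    qed (use that in blast)
    have "apply_list (u # rest) x = lam scB M i (compose (pcar (M i)) d c) (Pj M i x)" if x: "x \<in> Xc M" for x
      using c(2) u_eq lam_lam_Pj[OF d c(1) x] x by simp
    then show ?thesis using opL_compose[OF d c(1)] by blast
  next
    case False
    then have "u \<in> AB scB M i" "set rest \<subseteq> AF scB M i" using Cons.prems by auto
    then obtain d where d: "d \<in> opL scB (M i)" "\<forall>x\<in>Xc M. u x = lam scB M i d (Pj M i x)"
      by (auto simp: AB_def AB_eq)
    obtain c where c: "c \<in> opL scB (M i)"
      "\<forall>x\<in>Xc M. lam scB M i d (Pj M i (apply_list rest x)) = lam scB M i c (Pj M i x)"
      using lam_Pj_free_product[OF \<open>set rest \<subseteq> AF scB M i\<close> d(1)] by blast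
    have "apply_list (u # rest) x = lam scB M i c (Pj M i x)" if x: "x \<in> Xc M" for x
    proof -
      have "apply_list rest x \<in> Xc M"
        using apply_list_closed[of rest x] \<open>set rest \<subseteq> AF scB M i\<close> x by auto
      then show ?thesis using d(2) c(2) x by simp
    qed
    then show ?thesis using c(1) by blast
  qed
qed simp

end

theorem proposition6p2:
  fixes scB :: "complex \<Rightarrow> 'b::ring_1 \<Rightarrow> 'b"
    and M :: "'i \<Rightarrow> ('b, 'm) bimod"
    and i :: 'i
    and A :: "'b \<times> ('i, 'm) fvec set \<Rightarrow> 'b \<times> ('i, 'm) fvec set"
  assumes "calg scB"
    and "\<forall>j. bimodule scB (M j)"
    and "boolean_product (Xc M) (AF scB M i \<union> AB scB M i) (AB scB M i) A"
  shows "A \<in> AB scB M i \<and> A ` Xc M \<subseteq> Xsub M i"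
proof -
  interpret free_factor scB M i using assms(1,2) by unfold_locales
  obtain as where as: "as \<noteq> []" "set as \<subseteq> AF scB M i \<union> AB scB M i" "A = oprod (Xc M) as"
      "\<exists>u\<in>set as. u \<in> AB scB M i"
    using assms(3) unfolding boolean_product_def by blast
  obtain c where c: "c \<in> opL scB (M i)" "\<forall>x\<in>Xc M. apply_list as x = lam scB M i c (Pj M i x)"
    using boolean_product_lam_Pj[OF as(1,2,4)] by blast
  have "A x = lam scB M i c (Pj M i x)" if "x \<in> Xc M" for x
    using as(3) c(2) oprod_apply[OF that] that by simp
  then have A: "A = restrict (\<lambda>x. lam scB M i c (Pj M i x)) (Xc M)"
    by (intro extensionalityI[OF _ restrict_extensional]) (auto simp: as(3) oprod_extensional)
  show ?thesis
    unfolding A using restrict_lam_Pj_AB[OF c(1)] lam_Pj_range[OF c(1)] by auto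
qed

end
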